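(* Let $\mathcal{X}$ and $\mathcal{Z}$ be Euclidean spaces. Let $\mathfrak{S}:\mathcal{X}\to\mathcal{Z}$ be a differentiable mapping such that $\mathfrak{S}$ and its G\^ateaux derivative $\mathrm{D}\mathfrak{S}$ are Lipschitz continuous; let $g:\mathcal{Z}\to\mathbb{R}$ be Lipschitz continuous and $\eta$-weakly convex for some $\eta>0$; let $C\subset\mathcal{X}$ be a nonempty closed prox-regular set; set $F:=g\circ\mathfrak{S}$ and assume $\mathop{\mathrm{argmin}}_{x\in C}F(x)\neq\emptyset$. Choose $x_1\in C$, $c\in(0,1/2)$, $\rho\in(0,1)$, $\tilde\gamma>0$ and $\alpha\ge1$, and let $(x_n)_{n\ge1}\subset C$ and $(\gamma_n)_{n\ge1}$ be generated by the following projected variable smoothing algorithm: for $n=1,2,\dots$, set $\mu_n:=(2\eta)^{-1}n^{-1/\alpha}$ and $F_n:={}^{\mu_n}g\circ\mathfrak{S}$; then for $m=0,1,2,\dots$, pick some $x\in P_C\big(x_n-\rho^m\tilde\gamma\nabla F_n(x_n)\big)$, and if $F_n(x)\le F_n(x_n)-c\rho^m\tilde\gamma\big\|\frac{x_n-x}{\rho^m\tilde\gamma}\big\|^2$ holds, set $x_{n+1}:=x$, $\gamma_n:=\rho^m\tilde\gamma$ and stop the inner loop. Then: (a) $\liminf_{n\to\infty}\mathcal{M}_{\gamma_n}^{F_n,\iota_C}(x_n)=0$; (b) for any subsequence $(x_{m(l)})_{l\ge1}$ of $(x_n)$, with $m:\mathbb{N}\to\mathbb{N}$ monotonically increasing,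 such that $\lim_{l\to\infty}\mathcal{M}_{\gamma_{m(l)}}^{F_{m(l)},\iota_C}(x_{m(l)})=0$, every cluster point $x^\star\in C$ of $(x_{m(l)})_{l\ge1}$ satisfies $0\in\partial_F(F+\iota_C)(x^\star)$, i.e. is a stationary point of minimizing $F$ over $C$.
   Context: Prox-regularity of $C$: the metric projection $P_C(\bar x):=\mathop{\mathrm{argmin}}_{x\in C}\|\bar x-x\|$ (nonempty for every $\bar x$ since $C$ is closed) is single-valued on some open subset of $\mathcal{X}$ containing $C$. $\iota_C$ is the indicator function of $C$ ($0$ on $C$, $+\infty$ elsewhere). For a proper $J:\mathcal{X}\to\mathbb{R}\cup\{+\infty\}$, the Fr\'echet subdifferential $\partial_F J(\bar x)$ at $\bar x\in\mathrm{dom}\,J$ is the set of $v$ with $\sup_{\epsilon>0}\inf_{0<\|x-\bar x\|<\epsilon}\frac{J(x)-J(\bar x)-\langle v,x-\bar x\rangle}{\|x-\bar x\|}\ge0$ (empty if $\bar x\notin\mathrm{dom}\,J$); for continuously differentiable $J$ it equals $\{\nabla J(\bar x)\}$. For $\mu\in(0,\eta^{-1})$, $\mathrm{prox}_{\mu g}(\bar z):=\mathop{\mathrm{argmin}}_{z\in\mathcal{Z}}\big(g(z)+\frac{1}{2\mu}\|z-\bar z\|^2\big)$ is single-valued and the Moreau envelope ${}^{\mu}g(\bar z):=g(\mathrm{prox}_{\mu g}(\bar z))+\frac{1}{2\mu}\|\mathrm{prox}_{\mu g}(\bar z)-\bar z\|^2$ is continuously differentiable with $\nabla{}^{\mu}g(\bar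 z)=\mu^{-1}(\bar z-\mathrm{prox}_{\mu g}(\bar z))$. For a function $J:\mathcal{X}\to\mathbb{R}$, $\gamma>0$ and $\bar x\in\mathcal{X}$, $\mathcal{M}_{\gamma}^{J,\iota_C}(\bar x):=\mathrm{dist}\big(0,\{(\bar x-p)/\gamma : p\in P_C(\bar x-\gamma v),\ v\in\partial_F J(\bar x)\}\big)$, with $\mathrm{dist}(0,S)=\inf_{s\in S}\|s\|$. *)

theory Defs
  imports "HOL-Analysis.Analysis"
begin

definition proj :: "'a::real_normed_vector set \<Rightarrow> 'a \<Rightarrow> 'a set" where
  "proj C x = {p \<in> C. \<forall>q\<in>C. norm (x - p) \<le> norm (x - q)}"

definition prox_regular :: "'a::real_normed_vector set \<Rightarrow> bool" where
  "prox_regular C \<longleftrightarrow> (\<exists>U. open U \<and> C \<subseteq> U \<and> (\<forall>x\<in>U. \<exists>!p. p \<in> proj C x))"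

definition weakly_convex :: "real \<Rightarrow> ('a::real_normed_vector \<Rightarrow> real) \<Rightarrow> bool" where
  "weakly_convex \<eta> g \<longleftrightarrow> convex_on UNIV (\<lambda>z. g z + \<eta> / 2 * (norm z)\<^sup>2)"

definition prox :: "real \<Rightarrow> ('a::real_normed_vector \<Rightarrow> real) \<Rightarrow> 'a \<Rightarrow> 'a" where
  "prox \<mu> g z = (THE p. \<forall>q. g p + 1 / (2 * \<mu>) * (norm (p - z))\<^sup>2
                              \<le> g q + 1 / (2 * \<mu>) * (norm (q - z))\<^sup>2)"

definition moreau_env :: "real \<Rightarrow> ('a::real_normed_vector \<Rightarrow> real) \<Rightarrow> 'a \<Rightarrow> real" where
  "moreau_env \<mu> g z = g (prox \<mu> g z) + 1 / (2 * \<mu>) * (norm (prox \<mu> g z - z))\<^sup>2"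

definition grad :: "('a::real_inner \<Rightarrow> real) \<Rightarrow> 'a \<Rightarrow> 'a" where
  "grad f x = (THE v. (f has_derivative (\<lambda>h. v \<bullet> h)) (at x))"

definition frechet_subdiff :: "('a::real_inner \<Rightarrow> ereal) \<Rightarrow> 'a \<Rightarrow> 'a set" where
  "frechet_subdiff J xb = {v. J xb < \<infinity> \<and>
     (SUP \<epsilon>\<in>{0<..}. INF x\<in>{x. 0 < norm (x - xb) \<and> norm (x - xb) < \<epsilon>}.
        (J x - J xb - ereal (v \<bullet> (x - xb))) / ereal (norm (x - xb))) \<ge> 0}"

definition stat_measure :: "real \<Rightarrow> ('a::real_inner \<Rightarrow> real) \<Rightarrow> 'a set \<Rightarrow> 'a \<Rightarrow> real" where
  "stat_measure \<gamma> J C xb = infdist 0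
     {(1 / \<gamma>) *\<^sub>R (xb - p) | p v. v \<in> frechet_subdiff (\<lambda>x. ereal (J x)) xb \<and>
                                  p \<in> proj C (xb - \<gamma> *\<^sub>R v)}"

end

theory Submission
  imports Defs
begin

text \<open>The smoothed objectives \<open>Fn n = env(\<mu> n) g \<circ> S\<close> have gradients that are Lipschitz with
  constant \<open>O(1 / \<mu> n) = O(n)\<close>, so Armijo backtracking stops with a step \<open>\<gamma> n \<ge> \<kappa> / n\<close> for a
  constant \<open>\<kappa> > 0\<close>. Sufficient decrease, \<open>Fn (n+1) \<le> Fn n + 4 Lg\<^sup>2 (\<mu> n - \<mu> (n+1))\<close> and the lower
  bound of \<open>Fn n\<close> on \<open>C\<close> make \<open>\<Sum>n. \<gamma> n * d n\<^sup>2\<close> finite, where \<open>d n = \<bar>x n - x (n+1)\<bar> / \<gamma> n\<close>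
  dominates the stationarity measure; since \<open>\<Sum>n. 1 / n\<close> diverges, \<open>d n\<close> cannot stay away from \<open>0\<close>.

  At a cluster point \<open>xs\<close> along which the measure vanishes, the envelope gradients at \<open>S (x n)\<close>
  are bounded; a limit \<open>w\<close> of them is a proximal subgradient of \<open>g\<close> at \<open>S xs\<close>, while the projection
  steps and prox-regularity of \<open>C\<close> make \<open>-(S' xs)\<^sup>T w\<close> a proximal normal to \<open>C\<close> at \<open>xs\<close>. With the
  Taylor bound for \<open>S\<close> this yields a quadratic minorant of \<open>g \<circ> S + \<iota>\<^sub>C\<close> at \<open>xs\<close>, so \<open>0\<close> is a
  Frechet subgradient there.\<close>

lemma power2_norm_diff:
  fixes a b :: "'a::real_inner"
  shows "(norm (a - b))\<^sup>2 = (norm a)\<^sup>2 - 2 * (a \<bullet> b) + (norm b)\<^sup>2"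
  by (simp only: power2_norm_eq_inner) (simp add: inner_diff_left inner_diff_right inner_commute)

lemma power2_norm_add:
  fixes a b :: "'a::real_inner"
  shows "(norm (a + b))\<^sup>2 = (norm a)\<^sup>2 + 2 * (a \<bullet> b) + (norm b)\<^sup>2"
  by (simp only: power2_norm_eq_inner) (simp add: inner_add_left inner_add_right inner_commute)

lemma power2_norm_midpoint:
  fixes a b :: "'a::real_inner"
  shows "(norm ((1/2) *\<^sub>R (a + b)))\<^sup>2 = ((norm a)\<^sup>2 + (norm b)\<^sup>2) / 2 - (norm (b - a))\<^sup>2 / 4"
  by (simp only: power2_norm_eq_inner)
     (simp add: inner_add_left inner_add_right inner_diff_left inner_diff_right inner_commute field_simps)

lemma power2_norm_convex_comb:
  fixes p u :: "'a::real_inner"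
  shows "(norm ((1 - t) *\<^sub>R p + t *\<^sub>R u))\<^sup>2
           = (1 - t) * (norm p)\<^sup>2 + t * (norm u)\<^sup>2 - t * (1 - t) * (norm (u - p))\<^sup>2"
  by (simp only: power2_norm_eq_inner)
     (simp add: inner_add_left inner_add_right inner_diff_left inner_diff_right inner_commute algebra_simps)

lemma power2_norm_four_points:
  fixes p p' z z' :: "'a::real_inner"
  shows "(norm (p' - z))\<^sup>2 - (norm (p' - z'))\<^sup>2 + (norm (p - z'))\<^sup>2 - (norm (p - z))\<^sup>2
           = 2 * ((p' - p) \<bullet> (z' - z))"
  by (simp only: power2_norm_eq_inner) (simp add: inner_diff_left inner_diff_right inner_commute algebra_simps)

lemma le_of_mult_le_mult_self:
  fixes a b :: real
  assumes "a * a \<le> b * a" "0 \<le> b"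
  shows "a \<le> b"
  using assms by (cases "a \<le> 0") (auto intro: order_trans mult_right_le_imp_le)

section \<open>Metric projection\<close>

lemma proj_in_set: "p \<in> proj C y \<Longrightarrow> p \<in> C"
  unfolding proj_def by auto

lemma proj_nonempty:
  fixes C :: "'a::{real_normed_vector, heine_borel} set"
  assumes "closed C" "C \<noteq> {}"
  shows "\<exists>p. p \<in> proj C y"
proof -
  obtain p where "p \<in> C" "\<And>q. q \<in> C \<Longrightarrow> dist y p \<le> dist y q"
    using distance_attains_inf[OF assms] by blast
  then show ?thesis unfolding proj_def by (auto simp: dist_norm)
qed

lemma proj_variational_ineq:
  fixes C :: "'a::real_inner set"
  assumes "p \<in> proj C y" "q \<in> C"
  shows "2 * ((y - p) \<bullet> (q - p)) \<le> (norm (q - p))\<^sup>2"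
proof -
  have "norm (y - p) \<le> norm (y - q)" using assms unfolding proj_def by auto
  then have "(norm (y - p))\<^sup>2 \<le> (norm (y - q))\<^sup>2" by (simp add: power_mono)
  moreover have "(norm (y - q))\<^sup>2 = (norm (y - p))\<^sup>2 - 2 * ((y - p) \<bullet> (q - p)) + (norm (q - p))\<^sup>2"
    using power2_norm_diff[of "y - p" "q - p"] by simp
  ultimately show ?thesis by linarith
qed

lemma proj_on_segment:
  fixes C :: "'a::real_normed_vector set"
  assumes p: "p \<in> proj C y" and t: "0 \<le> t" "t \<le> 1"
  shows "p \<in> proj C (p + t *\<^sub>R (y - p))"
proof -
  let ?y' = "p + t *\<^sub>R (y - p)"
  have "norm (?y' - p) \<le> norm (?y' - q)" if q: "q \<in> C" for q
  proof -
    have "norm (y - p) \<le> norm (y - q)" using p q unfolding proj_def by auto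
    also have "\<dots> \<le> norm (y - ?y') + norm (?y' - q)"
      using norm_triangle_ineq[of "y - ?y'" "?y' - q"] by simp
    also have "y - ?y' = (1 - t) *\<^sub>R (y - p)" by (simp add: algebra_simps)
    also have "norm \<dots> = (1 - t) * norm (y - p)" using t by simp
    finally have "t * norm (y - p) \<le> norm (?y' - q)" by (simp add: algebra_simps)
    moreover have "norm (?y' - p) = t * norm (y - p)" using t by simp
    ultimately show ?thesis by linarith
  qed
  then show ?thesis using proj_in_set[OF p] unfolding proj_def by auto
qed

definition proj_select :: "'a::real_normed_vector set \<Rightarrow> 'a \<Rightarrow> 'a" where
  "proj_select C y = (SOME p. p \<in> proj C y)"

lemma proj_select_in_proj:
  fixes C :: "'a::{real_normed_vector, heine_borel} set"
  assumes "closed C" "C \<noteq> {}"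
  shows "proj_select C y \<in> proj C y"
  unfolding proj_select_def using proj_nonempty[OF assms] by (rule someI_ex)

text \<open>Where the projection is single-valued it has a closed graph with bounded values, hence
  it is continuous.\<close>

lemma continuous_on_proj_select:
  fixes C :: "'a::euclidean_space set"
  assumes C: "closed C" "C \<noteq> {}" and unique: "\<forall>y\<in>cball z r. \<exists>!p. p \<in> proj C y"
  shows "continuous_on (cball z r) (proj_select C)"
proof -
  obtain c0 where c0: "c0 \<in> C" using C by auto
  have "proj_select C \<in> cball z r \<rightarrow> cball z (2 * r + norm (z - c0))"
  proof
    fix y assume y: "y \<in> cball z r"
    have "norm (y - proj_select C y) \<le> norm (y - c0)"
      using proj_select_in_proj[OF C, of y] c0 unfolding proj_def by auto
    also have "\<dots> \<le> norm (y - z) + norm (z - c0)"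
      using norm_triangle_ineq[of "y - z" "z - c0"] by simp
    finally have "norm (z - proj_select C y) \<le> norm (z - y) + (norm (y - z) + norm (z - c0))"
      using norm_triangle_ineq[of "z - y" "y - proj_select C y"] by simp
    moreover have "norm (z - y) \<le> r" "norm (y - z) \<le> r"
      using y by (auto simp: dist_norm norm_minus_commute)
    ultimately show "proj_select C y \<in> cball z (2 * r + norm (z - c0))" by (simp add: dist_norm)
  qed
  moreover have "(\<lambda>y. (y, proj_select C y)) ` cball z r =
      (cball z r \<times> C) \<inter> (\<Inter>q\<in>C. {w. norm (fst w - snd w) \<le> norm (fst w - q)})"
  proof (rule set_eqI, rule iffI)
    fix w assume "w \<in> (\<lambda>y. (y, proj_select C y)) ` cball z r"
    then show "w \<in> (cball z r \<times> C) \<inter> (\<Inter>q\<in>C. {w. norm (fst w - snd w) \<le> norm (fst w - q)})"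
      using proj_select_in_proj[OF C] unfolding proj_def by auto
  next
    fix w assume w: "w \<in> (cball z r \<times> C) \<inter> (\<Inter>q\<in>C. {w. norm (fst w - snd w) \<le> norm (fst w - q)})"
    obtain y p where wp: "w = (y, p)" by fastforce
    have y: "y \<in> cball z r" and p: "p \<in> proj C y" using w wp unfolding proj_def by auto
    have "p = proj_select C y" using unique y p proj_select_in_proj[OF C, of y] by blast
    then show "w \<in> (\<lambda>y. (y, proj_select C y)) ` cball z r" using wp y by blast
  qed
  moreover have "closed ((cball z r \<times> C) \<inter> (\<Inter>q\<in>C. {w. norm (fst w - snd w) \<le> norm (fst w - q)}))"
    by (intro closed_Int closed_Times closed_cball C closed_INT ballI closed_Collect_le continuous_intros)
  ultimately show ?thesis
    by (intro continuous_from_closed_graph[of "cball z (2 * r + norm (z - c0))"]) auto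
qed

text \<open>A Brouwer fixed point of \<open>y \<mapsto> x0 + r (x0 - P y) / \<bar>x0 - P y\<bar>\<close> is a point \<open>y1\<close> such that
  \<open>x0\<close> lies on the segment from \<open>P y1\<close> to \<open>y1\<close>; hence \<open>P y1\<close> is also a projection of \<open>x0\<close>, and it
  equals \<open>p\<close> by uniqueness.\<close>

lemma proj_extend_along_normal:
  fixes C :: "'a::euclidean_space set"
  assumes C: "closed C" "C \<noteq> {}" and unique: "\<forall>y\<in>cball x0 r. \<exists>!p. p \<in> proj C y"
    and r: "r > 0" and p: "p \<in> proj C x0" and x0: "x0 \<notin> C"
  shows "p \<in> proj C (x0 + (r / norm (x0 - p)) *\<^sub>R (x0 - p))"
proof -
  define f where "f y = x0 + (r / norm (x0 - proj_select C y)) *\<^sub>R (x0 - proj_select C y)" for y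
  have nz: "x0 - proj_select C y \<noteq> 0" for y
    using proj_in_set[OF proj_select_in_proj[OF C]] x0 by auto
  have "continuous_on (cball x0 r) f"
    unfolding f_def using continuous_on_proj_select[OF C unique] nz by (intro continuous_intros) auto
  moreover have "f \<in> cball x0 r \<rightarrow> cball x0 r"
    using nz r by (auto simp: f_def dist_norm)
  ultimately obtain y1 where y1: "f y1 = y1"
    using brouwer[of "cball x0 r" f] r by auto
  define q where "q = proj_select C y1"
  have q: "q \<in> proj C y1" unfolding q_def by (rule proj_select_in_proj[OF C])
  define d where "d = norm (x0 - q)"
  have d: "d > 0" unfolding d_def q_def using nz by simp
  have y1_eq: "y1 = x0 + (r / d) *\<^sub>R (x0 - q)" using y1 unfolding f_def q_def d_def by simp
  define t where "t = d / (d + r)"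
  have t: "0 \<le> t" "t \<le> 1" unfolding t_def using d r by auto
  have "t *\<^sub>R (y1 - q) = (t * (1 + r / d)) *\<^sub>R (x0 - q)"
    unfolding y1_eq by (simp add: algebra_simps)
  also have "t * (1 + r / d) = 1"
    unfolding t_def using d r add_pos_pos[of "d * d" "d * r"] by (simp add: field_simps)
  finally have "q + t *\<^sub>R (y1 - q) = x0" by simp
  then have "q \<in> proj C x0" using proj_on_segment[OF q t] by simp
  moreover have "x0 \<in> cball x0 r" using r by simp
  ultimately have "q = p" using unique p by blast
  then show ?thesis using q y1_eq d_def by simp
qed

lemma proj_normal_ineq_of_unique:
  fixes C :: "'a::euclidean_space set"
  assumes C: "closed C" "C \<noteq> {}" and unique: "\<forall>y\<in>cball (p + v) r. \<exists>!p. p \<in> proj C y"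
    and r: "r > 0" and v: "v \<noteq> 0" and p: "p \<in> proj C (p + v)" and y: "y \<in> C"
  shows "2 * (norm v + r) * (v \<bullet> (y - p)) \<le> norm v * (norm (y - p))\<^sup>2"
proof -
  have "p + v \<notin> C"
  proof
    assume "p + v \<in> C"
    then have "norm v \<le> 0" using p unfolding proj_def by fastforce
    then show False using v by simp
  qed
  from proj_extend_along_normal[OF C unique r p this]
  have "p \<in> proj C (p + (1 + r / norm v) *\<^sub>R v)" by (simp add: algebra_simps)
  from proj_variational_ineq[OF this y]
  have "2 * ((1 + r / norm v) * (v \<bullet> (y - p))) \<le> (norm (y - p))\<^sup>2" by simp
  then have "norm v * (2 * ((1 + r / norm v) * (v \<bullet> (y - p)))) \<le> norm v * (norm (y - p))\<^sup>2"
    by (simp add: mult_left_mono)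
  moreover have "norm v * (2 * ((1 + r / norm v) * (v \<bullet> (y - p)))) = 2 * (norm v + r) * (v \<bullet> (y - p))"
    using v by (simp add: field_simps)
  ultimately show ?thesis by simp
qed

text \<open>Shrinking the normal vector keeps the ball of radius \<open>e/4\<close> around the shifted point inside
  the ball of radius \<open>e\<close> where the projection is unique.\<close>

lemma proj_normal_ineq_near:
  fixes C :: "'a::euclidean_space set"
  assumes C: "closed C" "C \<noteq> {}" and unique: "\<forall>w\<in>ball xs e. \<exists>!p. p \<in> proj C w"
    and pxs: "norm (p - xs) < e / 4" and t: "t > 0" and p: "p \<in> proj C (p + t *\<^sub>R v)" and y: "y \<in> C"
  shows "2 * (e / 4) * (v \<bullet> (y - p)) \<le> norm v * (norm (y - p))\<^sup>2"
proof (cases "v = 0")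
  case False
  define R where "R = e / 4"
  have R: "R > 0" unfolding R_def using pxs by (smt (verit) norm_ge_zero)
  define s where "s = min 1 (R / (t * norm v))"
  have s: "0 < s" "s \<le> 1" "s * (t * norm v) \<le> R"
    unfolding s_def using False R t by (auto simp: min_def field_simps)
  define u where "u = (s * t) *\<^sub>R v"
  have u: "norm u = s * t * norm v" "u \<noteq> 0" unfolding u_def using s t False by auto
  have pu: "p \<in> proj C (p + u)"
    using proj_on_segment[OF p, of s] s unfolding u_def by simp
  have "cball (p + u) R \<subseteq> ball xs e"
  proof
    fix w assume "w \<in> cball (p + u) R"
    then have "norm (w - xs) \<le> R + norm u + norm (p - xs)"
      using norm_triangle_ineq[of "w - (p + u)" "u + (p - xs)"] norm_triangle_ineq[of u "p - xs"]
      by (simp add: dist_norm norm_minus_commute algebra_simps)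
    moreover have "norm u \<le> R" using s(3) u(1) by (simp add: mult.assoc)
    ultimately show "w \<in> ball xs e" using pxs R unfolding R_def by (simp add: dist_norm norm_minus_commute)
  qed
  then have "\<forall>w\<in>cball (p + u) R. \<exists>!p. p \<in> proj C w" using unique by blast
  from proj_normal_ineq_of_unique[OF C this R u(2) pu y]
  have "(s * t) * (2 * (norm u + R) * (v \<bullet> (y - p))) \<le> (s * t) * (norm v * (norm (y - p))\<^sup>2)"
    unfolding u(1) unfolding u_def by (simp add: algebra_simps)
  then have "2 * (norm u + R) * (v \<bullet> (y - p)) \<le> norm v * (norm (y - p))\<^sup>2"
    using s t by (simp add: mult_le_cancel_left_pos)
  moreover have "2 * R * (v \<bullet> (y - p)) \<le> 2 * (norm u + R) * (v \<bullet> (y - p))" if "0 \<le> v \<bullet> (y - p)"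
    using that by (simp add: mult_right_mono)
  moreover have "2 * R * (v \<bullet> (y - p)) \<le> 0" if "v \<bullet> (y - p) \<le> 0"
    using that R by (simp add: mult_nonneg_nonpos)
  moreover have "0 \<le> norm v * (norm (y - p))\<^sup>2" by simp
  ultimately show ?thesis unfolding R_def by (meson order_trans nle_le)
qed simp

lemma prox_regular_normal_ineq:
  fixes C :: "'a::euclidean_space set"
  assumes C: "closed C" "C \<noteq> {}" and pr: "prox_regular C" and xs: "xs \<in> C"
  shows "\<exists>R>0. \<forall>p\<in>C. norm (p - xs) < R \<longrightarrow> (\<forall>t>0. \<forall>v. p \<in> proj C (p + t *\<^sub>R v) \<longrightarrow>
           (\<forall>y\<in>C. 2 * R * (v \<bullet> (y - p)) \<le> norm v * (norm (y - p))\<^sup>2))"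
proof -
  obtain U where U: "open U" "C \<subseteq> U" "\<forall>y\<in>U. \<exists>!p. p \<in> proj C y"
    using pr unfolding prox_regular_def by blast
  obtain e where e: "e > 0" "ball xs e \<subseteq> U" using U(1,2) xs open_contains_ball by blast
  then have "\<forall>w\<in>ball xs e. \<exists>!p. p \<in> proj C w" using U(3) by blast
  then show ?thesis using proj_normal_ineq_near[OF C] e(1) by (intro exI[of _ "e / 4"]) auto
qed

section \<open>Moreau envelope of a Lipschitz weakly convex function\<close>

definition moreau_grad :: "real \<Rightarrow> ('a::real_normed_vector \<Rightarrow> real) \<Rightarrow> 'a \<Rightarrow> 'a" where
  "moreau_grad \<mu> g z = (1 / \<mu>) *\<^sub>R (z - prox \<mu> g z)"

locale weakly_convex_lipschitz =
  fixes g :: "'z::euclidean_space \<Rightarrow> real" and \<eta> Lg :: real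
  assumes eta_pos: "\<eta> > 0" and g_weakly_convex: "weakly_convex \<eta> g"
    and g_lipschitz: "Lg-lipschitz_on UNIV g"
begin

definition prox_obj :: "real \<Rightarrow> 'z \<Rightarrow> 'z \<Rightarrow> real" where
  "prox_obj \<mu> z p = g p + 1 / (2 * \<mu>) * (norm (p - z))\<^sup>2"

lemma Lg_nonneg: "0 \<le> Lg"
  using g_lipschitz lipschitz_on_nonneg by blast

lemma g_lipschitzD: "\<bar>g a - g b\<bar> \<le> Lg * norm (a - b)"
  using lipschitz_onD[OF g_lipschitz, of a b] by (simp add: dist_norm dist_real_def)

lemma isCont_g: "isCont g z"
  using lipschitz_on_continuous_on[OF g_lipschitz] by (simp add: continuous_on_eq_continuous_at)

lemma weakly_convex_ineq:
  assumes "0 \<le> t" "t \<le> 1"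
  shows "g ((1 - t) *\<^sub>R a + t *\<^sub>R b) + \<eta> / 2 * (norm ((1 - t) *\<^sub>R a + t *\<^sub>R b))\<^sup>2
           \<le> (1 - t) * (g a + \<eta> / 2 * (norm a)\<^sup>2) + t * (g b + \<eta> / 2 * (norm b)\<^sup>2)"
  using convex_onD[OF g_weakly_convex[unfolded weakly_convex_def], of t a b] assms by simp

context
  fixes \<mu> :: real
  assumes mu: "0 < \<mu>" "2 * \<mu> * \<eta> \<le> 1"
begin

lemma prox_obj_has_min: "\<exists>p. \<forall>q. prox_obj \<mu> z p \<le> prox_obj \<mu> z q"
proof -
  define r where "r = 2 * \<mu> * Lg + 1"
  have r: "r > 0" unfolding r_def using mu Lg_nonneg by (simp add: add_nonneg_pos)
  have "continuous_on (cball z r) (prox_obj \<mu> z)"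
    unfolding prox_obj_def using isCont_g by (intro continuous_intros continuous_at_imp_continuous_on) auto
  then obtain p where p: "p \<in> cball z r" "\<And>q. q \<in> cball z r \<Longrightarrow> prox_obj \<mu> z p \<le> prox_obj \<mu> z q"
    using continuous_attains_inf[of "cball z r" "prox_obj \<mu> z"] r by auto
  have "prox_obj \<mu> z p \<le> prox_obj \<mu> z q" for q
  proof (cases "q \<in> cball z r")
    case False
    then have qr: "norm (q - z) > r" by (simp add: dist_norm norm_minus_commute)
    have "prox_obj \<mu> z p \<le> prox_obj \<mu> z z" using p r by auto
    also have "\<dots> = g z" unfolding prox_obj_def by simp
    also have "\<dots> \<le> g q + Lg * norm (q - z)" using g_lipschitzD[of z q] by (simp add: norm_minus_commute)
    also have "Lg * norm (q - z) \<le> (norm (q - z) / (2 * \<mu>)) * norm (q - z)"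
      using qr mu unfolding r_def by (intro mult_right_mono) (simp_all add: field_simps)
    finally show ?thesis unfolding prox_obj_def by (simp add: power2_eq_square)
  qed (use p in auto)
  then show ?thesis by blast
qed

text \<open>The prox objective is \<open>1/\<mu> - \<eta> \<ge> 1/(2\<mu>)\<close> strongly convex; the midpoint inequality suffices.\<close>

lemma prox_obj_quadratic_growth:
  assumes p: "\<forall>q. prox_obj \<mu> z p \<le> prox_obj \<mu> z q"
  shows "prox_obj \<mu> z p + (norm (y - p))\<^sup>2 / (8 * \<mu>) \<le> prox_obj \<mu> z y"
proof -
  define m where "m = (1/2) *\<^sub>R (p + y)"
  define k where "k = 1 / (2 * \<mu>)"
  define D where "D = (norm (y - p))\<^sup>2"
  have obj: "prox_obj \<mu> z q = g q + k * (norm (q - z))\<^sup>2" for q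
    unfolding prox_obj_def k_def ..
  have "g m + \<eta> / 2 * (norm m)\<^sup>2 \<le> (1 - 1/2) * (g p + \<eta> / 2 * (norm p)\<^sup>2) + 1/2 * (g y + \<eta> / 2 * (norm y)\<^sup>2)"
    using weakly_convex_ineq[of "1/2" p y] unfolding m_def by (simp add: algebra_simps)
  moreover have "(norm m)\<^sup>2 = ((norm p)\<^sup>2 + (norm y)\<^sup>2) / 2 - D / 4"
    unfolding m_def D_def by (rule power2_norm_midpoint)
  ultimately have gm: "g m \<le> (g p + g y) / 2 + \<eta> * D / 8" by (simp add: field_simps)
  have "(1/2) *\<^sub>R z + (1/2) *\<^sub>R z = z" by (simp flip: scaleR_add_left)
  then have "m - z = (1/2) *\<^sub>R ((p - z) + (y - z))" unfolding m_def by (simp add: algebra_simps)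
  then have mz: "(norm (m - z))\<^sup>2 = ((norm (p - z))\<^sup>2 + (norm (y - z))\<^sup>2) / 2 - D / 4"
    using power2_norm_midpoint[of "p - z" "y - z"] unfolding D_def by simp
  have "prox_obj \<mu> z p \<le> prox_obj \<mu> z m" using p by blast
  also have "\<dots> = g m + k * (norm (m - z))\<^sup>2" by (rule obj)
  also have "\<dots> \<le> (g p + g y) / 2 + \<eta> * D / 8 + k * (((norm (p - z))\<^sup>2 + (norm (y - z))\<^sup>2) / 2 - D / 4)"
    using gm unfolding mz by simp
  also have "\<dots> = (prox_obj \<mu> z p + prox_obj \<mu> z y) / 2 + \<eta> * D / 8 - k * D / 4"
    unfolding obj by (simp add: field_simps)
  finally have "prox_obj \<mu> z p \<le> (prox_obj \<mu> z p + prox_obj \<mu> z y) / 2 + \<eta> * D / 8 - k * D / 4" .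
  moreover have "\<eta> * D / 8 \<le> k * D / 8"
    unfolding k_def D_def using mu by (intro divide_right_mono mult_right_mono) (simp_all add: field_simps)
  ultimately have "prox_obj \<mu> z p + k * D / 4 \<le> prox_obj \<mu> z y" by (simp add: field_simps)
  moreover have "k * D / 4 = D / (8 * \<mu>)" unfolding k_def by simp
  ultimately show ?thesis unfolding D_def by simp
qed

lemma prox_minimizes: "prox_obj \<mu> z (prox \<mu> g z) \<le> prox_obj \<mu> z q"
proof -
  obtain p where p: "\<forall>q. prox_obj \<mu> z p \<le> prox_obj \<mu> z q" using prox_obj_has_min by blast
  have "prox \<mu> g z = p"
    unfolding prox_def
  proof (rule the_equality)
    show "\<forall>q. g p + 1 / (2 * \<mu>) * (norm (p - z))\<^sup>2 \<le> g q + 1 / (2 * \<mu>) * (norm (q - z))\<^sup>2"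
      using p unfolding prox_obj_def .
  next
    fix p' assume "\<forall>q. g p' + 1 / (2 * \<mu>) * (norm (p' - z))\<^sup>2 \<le> g q + 1 / (2 * \<mu>) * (norm (q - z))\<^sup>2"
    then have "prox_obj \<mu> z p' \<le> prox_obj \<mu> z p" unfolding prox_obj_def by blast
    with prox_obj_quadratic_growth[OF p, of p'] have "(norm (p' - p))\<^sup>2 / (8 * \<mu>) \<le> 0" by linarith
    then show "p' = p" using mu by (simp add: divide_le_0_iff)
  qed
  then show ?thesis using p by simp
qed

lemma moreau_env_eq_prox_obj: "moreau_env \<mu> g z = prox_obj \<mu> z (prox \<mu> g z)"
  unfolding moreau_env_def prox_obj_def ..

lemma norm_prox_diff_le: "norm (prox \<mu> g z - z) \<le> 2 * \<mu> * Lg"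
proof -
  define d where "d = norm (prox \<mu> g z - z)"
  have "g (prox \<mu> g z) + 1 / (2 * \<mu>) * d\<^sup>2 \<le> g z"
    using prox_minimizes[of z z] unfolding prox_obj_def d_def by simp
  moreover have "g z \<le> g (prox \<mu> g z) + Lg * d"
    using g_lipschitzD[of z "prox \<mu> g z"] unfolding d_def by (simp add: norm_minus_commute)
  ultimately have "1 / (2 * \<mu>) * d\<^sup>2 \<le> Lg * d" by linarith
  then have "d * d \<le> (2 * \<mu> * Lg) * d" using mu by (simp add: field_simps power2_eq_square)
  then show ?thesis unfolding d_def by (rule le_of_mult_le_mult_self) (use mu Lg_nonneg in simp)
qed

lemma moreau_env_ge: "g z - 2 * \<mu> * Lg\<^sup>2 \<le> moreau_env \<mu> g z"
proof -
  define p where "p = prox \<mu> g z"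
  have "g z \<le> g p + Lg * norm (p - z)" using g_lipschitzD[of z p] by (simp add: norm_minus_commute)
  also have "Lg * norm (p - z) \<le> Lg * (2 * \<mu> * Lg)"
    using norm_prox_diff_le[of z] Lg_nonneg unfolding p_def by (simp add: mult_left_mono)
  also have "g p \<le> moreau_env \<mu> g z" unfolding moreau_env_eq_prox_obj prox_obj_def p_def using mu by simp
  finally show ?thesis by (simp add: power2_eq_square algebra_simps)
qed

lemma prox_lipschitz: "norm (prox \<mu> g z - prox \<mu> g z') \<le> 4 * norm (z - z')"
proof -
  define p where "p = prox \<mu> g z"
  define p' where "p' = prox \<mu> g z'"
  define k where "k = 1 / (2 * \<mu>)"
  have obj: "prox_obj \<mu> a q = g q + k * (norm (q - a))\<^sup>2" for a q unfolding prox_obj_def k_def ..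
  have "prox_obj \<mu> z p + (norm (p' - p))\<^sup>2 / (8 * \<mu>) \<le> prox_obj \<mu> z p'"
    "prox_obj \<mu> z' p' + (norm (p - p'))\<^sup>2 / (8 * \<mu>) \<le> prox_obj \<mu> z' p"
    unfolding p_def p'_def by (rule prox_obj_quadratic_growth[OF allI[OF prox_minimizes]])+
  then have "2 * ((norm (p' - p))\<^sup>2 / (8 * \<mu>)) \<le>
      k * ((norm (p' - z))\<^sup>2 - (norm (p' - z'))\<^sup>2 + (norm (p - z'))\<^sup>2 - (norm (p - z))\<^sup>2)"
    unfolding obj by (simp add: norm_minus_commute field_simps)
  also have "\<dots> = 1 / \<mu> * ((p' - p) \<bullet> (z' - z))" unfolding k_def by (simp add: power2_norm_four_points)
  also have "\<dots> \<le> 1 / \<mu> * (norm (p' - p) * norm (z' - z))"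
    using mu by (intro mult_left_mono norm_cauchy_schwarz) simp
  finally have "norm (p' - p) * norm (p' - p) \<le> (4 * norm (z' - z)) * norm (p' - p)"
    using mu by (simp add: field_simps power2_eq_square)
  then have "norm (p' - p) \<le> 4 * norm (z' - z)" by (rule le_of_mult_le_mult_self) simp
  then show ?thesis unfolding p_def p'_def by (simp add: norm_minus_commute)
qed

lemma prox_obj_shift:
  "prox_obj \<mu> z' q - prox_obj \<mu> z q
     = moreau_grad \<mu> g z \<bullet> (z' - z) + (prox \<mu> g z - q) \<bullet> (z' - z) / \<mu> + (norm (z' - z))\<^sup>2 / (2 * \<mu>)"
proof -
  have "(norm (q - z'))\<^sup>2 - (norm (q - z))\<^sup>2 = 2 * ((z - q) \<bullet> (z' - z)) + (norm (z' - z))\<^sup>2"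
    using power2_norm_diff[of "q - z" "z' - z"] by (simp add: algebra_simps inner_diff_left)
  moreover have "moreau_grad \<mu> g z \<bullet> (z' - z) + (prox \<mu> g z - q) \<bullet> (z' - z) / \<mu> = (z - q) \<bullet> (z' - z) / \<mu>"
    unfolding moreau_grad_def using mu by (simp add: inner_diff_left field_simps)
  ultimately show ?thesis unfolding prox_obj_def using mu by (simp add: field_simps)
qed

lemma moreau_env_taylor:
  "\<bar>moreau_env \<mu> g z' - moreau_env \<mu> g z - moreau_grad \<mu> g z \<bullet> (z' - z)\<bar> \<le> 4 / \<mu> * (norm (z' - z))\<^sup>2"
proof -
  define p where "p = prox \<mu> g z"
  define p' where "p' = prox \<mu> g z'"
  define E where "E = moreau_env \<mu> g z' - moreau_env \<mu> g z - moreau_grad \<mu> g z \<bullet> (z' - z)"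
  define N where "N = (norm (z' - z))\<^sup>2"
  have env: "moreau_env \<mu> g z = prox_obj \<mu> z p" "moreau_env \<mu> g z' = prox_obj \<mu> z' p'"
    unfolding p_def p'_def by (rule moreau_env_eq_prox_obj)+
  have "prox_obj \<mu> z' p' \<le> prox_obj \<mu> z' p" unfolding p'_def by (rule prox_minimizes)
  then have "E \<le> N / (2 * \<mu>)"
    using prox_obj_shift[of z' p z] unfolding E_def N_def env p_def by simp
  also have "\<dots> \<le> 4 / \<mu> * N" unfolding N_def using mu by (simp add: field_simps)
  finally have upper: "E \<le> 4 / \<mu> * N" .
  have "- ((p - p') \<bullet> (z' - z)) \<le> norm (p - p') * norm (z' - z)"
    using Cauchy_Schwarz_ineq2[of "p - p'" "z' - z"] by (simp add: abs_le_iff)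
  also have "\<dots> \<le> (4 * norm (z' - z)) * norm (z' - z)"
    using prox_lipschitz[of z z'] unfolding p_def p'_def
    by (intro mult_right_mono) (simp_all add: norm_minus_commute)
  also have "\<dots> = 4 * N" unfolding N_def by (simp add: power2_eq_square)
  finally have "- (4 / \<mu> * N) \<le> (p - p') \<bullet> (z' - z) / \<mu>" using mu by (simp add: field_simps)
  moreover have "prox_obj \<mu> z p \<le> prox_obj \<mu> z p'" unfolding p_def by (rule prox_minimizes)
  then have "(p - p') \<bullet> (z' - z) / \<mu> + N / (2 * \<mu>) \<le> E"
    using prox_obj_shift[of z' p' z] unfolding E_def N_def env p_def by simp
  moreover have "0 \<le> N / (2 * \<mu>)" unfolding N_def using mu by simp
  ultimately have "- (4 / \<mu> * N) \<le> E" by linarith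
  with upper show ?thesis unfolding E_def N_def by (simp add: abs_le_iff)
qed

lemma moreau_env_has_derivative:
  "(moreau_env \<mu> g has_derivative (\<lambda>h. moreau_grad \<mu> g z \<bullet> h)) (at z)"
  unfolding has_derivative_iff_norm
proof (intro conjI)
  show "bounded_linear (\<lambda>h. moreau_grad \<mu> g z \<bullet> h)" by (rule bounded_linear_inner_right)
  have "((\<lambda>y. 4 / \<mu> * norm (y - z)) \<longlongrightarrow> 4 / \<mu> * norm (z - z)) (at z)"
    by (intro tendsto_intros)
  then have lim: "((\<lambda>y. 4 / \<mu> * norm (y - z)) \<longlongrightarrow> 0) (at z)" by simp
  have "norm (moreau_env \<mu> g y - moreau_env \<mu> g z - moreau_grad \<mu> g z \<bullet> (y - z)) / norm (y - z)
          \<le> 4 / \<mu> * norm (y - z)" for y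
  proof (cases "y = z")
    case False
    then have "\<bar>moreau_env \<mu> g y - moreau_env \<mu> g z - moreau_grad \<mu> g z \<bullet> (y - z)\<bar> / norm (y - z)
        \<le> 4 / \<mu> * (norm (y - z))\<^sup>2 / norm (y - z)"
      by (intro divide_right_mono moreau_env_taylor) simp
    also have "\<dots> = 4 / \<mu> * norm (y - z)" using False by (simp add: power2_eq_square)
    finally show ?thesis by simp
  qed simp
  then show "((\<lambda>y. norm (moreau_env \<mu> g y - moreau_env \<mu> g z - moreau_grad \<mu> g z \<bullet> (y - z))
      / norm (y - z)) \<longlongrightarrow> 0) (at z)"
    by (intro Lim_null_comparison[OF _ lim] always_eventually) simp
qed

lemma norm_moreau_grad_le: "norm (moreau_grad \<mu> g z) \<le> 2 * Lg"
proof -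
  have "norm (moreau_grad \<mu> g z) = norm (prox \<mu> g z - z) / \<mu>"
    unfolding moreau_grad_def using mu by (simp add: norm_minus_commute)
  also have "\<dots> \<le> 2 * Lg" using norm_prox_diff_le[of z] mu by (simp add: divide_le_eq mult_ac)
  finally show ?thesis .
qed

text \<open>Compare the prox objective at \<open>prox z\<close> with its value at \<open>(1 - \<mu>\<eta>) prox z + \<mu>\<eta> u\<close> and
  use weak convexity.\<close>

lemma prox_subgradient_ineq:
  "g (prox \<mu> g z) + moreau_grad \<mu> g z \<bullet> (u - prox \<mu> g z) - \<eta> * (norm (u - prox \<mu> g z))\<^sup>2 \<le> g u"
proof -
  define p where "p = prox \<mu> g z"
  define t where "t = \<mu> * \<eta>"
  define d where "d = u - p"
  define k where "k = 1 / (2 * \<mu>)"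
  define q where "q = (1 - t) *\<^sub>R p + t *\<^sub>R u"
  have t: "0 < t" "t \<le> 1" unfolding t_def using mu eta_pos by auto
  have qz_eq: "q - z = (p - z) + t *\<^sub>R d" unfolding q_def d_def by (simp add: algebra_simps)
  have qz: "(norm (q - z))\<^sup>2 = (norm (p - z))\<^sup>2 + 2 * t * ((p - z) \<bullet> d) + t\<^sup>2 * (norm d)\<^sup>2"
    unfolding qz_eq power2_norm_add by (simp add: power2_eq_square algebra_simps)
  have "g p + k * (norm (p - z))\<^sup>2 \<le> g q + k * (norm (q - z))\<^sup>2"
    using prox_minimizes[of z q] unfolding prox_obj_def p_def k_def .
  then have "g p - k * (2 * t * ((p - z) \<bullet> d) + t\<^sup>2 * (norm d)\<^sup>2) \<le> g q"
    unfolding qz by (simp add: algebra_simps)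
  moreover have "g q \<le> (1 - t) * g p + t * g u + \<eta> / 2 * (t * (1 - t) * (norm d)\<^sup>2)"
    using weakly_convex_ineq[OF less_imp_le[OF t(1)] t(2), of p u]
    unfolding power2_norm_convex_comb q_def d_def by (simp add: field_simps)
  ultimately have "t * (g p - 2 * k * ((p - z) \<bullet> d) - k * t * (norm d)\<^sup>2)
      \<le> t * (g u + \<eta> / 2 * (1 - t) * (norm d)\<^sup>2)"
    by (simp add: field_simps power2_eq_square)
  then have "g p - 2 * k * ((p - z) \<bullet> d) - k * t * (norm d)\<^sup>2 \<le> g u + \<eta> / 2 * (1 - t) * (norm d)\<^sup>2"
    using t(1) by (rule mult_left_le_imp_le)
  moreover have "- (2 * k * ((p - z) \<bullet> d)) = moreau_grad \<mu> g z \<bullet> d"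
    unfolding moreau_grad_def p_def k_def using mu
    by (simp add: inner_diff_left inner_diff_right inner_commute algebra_simps)
  moreover have "k * t = \<eta> / 2" unfolding k_def t_def using mu by simp
  moreover have "\<eta> / 2 * (1 - t) * (norm d)\<^sup>2 \<le> \<eta> / 2 * (norm d)\<^sup>2"
    using t eta_pos by (simp add: mult_right_mono)
  ultimately have "g p + moreau_grad \<mu> g z \<bullet> d - \<eta> * (norm d)\<^sup>2 \<le> g u"
    by (simp add: field_simps)
  then show ?thesis unfolding p_def d_def .
qed

end

lemma moreau_env_le_of_le:
  assumes mu: "0 < \<mu>" "2 * \<mu> * \<eta> \<le> 1" and mu': "0 < \<mu>'" "\<mu>' \<le> \<mu>"
  shows "moreau_env \<mu>' g z \<le> moreau_env \<mu> g z + 2 * Lg\<^sup>2 * (\<mu> / \<mu>') * (\<mu> - \<mu>')"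
proof -
  have mu'_le: "2 * \<mu>' * \<eta> \<le> 1" using mu mu' eta_pos by (smt (verit) mult_right_mono)
  define p where "p = prox \<mu> g z"
  define N where "N = (norm (p - z))\<^sup>2"
  have "moreau_env \<mu>' g z \<le> prox_obj \<mu>' z p"
    unfolding moreau_env_eq_prox_obj[OF mu'(1) mu'_le] by (rule prox_minimizes[OF mu'(1) mu'_le])
  also have "\<dots> = moreau_env \<mu> g z + N * (1 / (2 * \<mu>') - 1 / (2 * \<mu>))"
    unfolding moreau_env_eq_prox_obj[OF mu] prox_obj_def p_def N_def by (simp add: algebra_simps)
  also have "N * (1 / (2 * \<mu>') - 1 / (2 * \<mu>)) \<le> (2 * \<mu> * Lg)\<^sup>2 * (1 / (2 * \<mu>') - 1 / (2 * \<mu>))"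
    unfolding N_def p_def using norm_prox_diff_le[OF mu, of z] mu mu'
    by (intro mult_right_mono power_mono) (simp_all add: field_simps)
  also have "(2 * \<mu> * Lg)\<^sup>2 * (1 / (2 * \<mu>') - 1 / (2 * \<mu>)) = 2 * Lg\<^sup>2 * (\<mu> / \<mu>') * (\<mu> - \<mu>')"
    using mu mu' by (simp add: field_simps power2_eq_square)
  finally show ?thesis by simp
qed

lemma prox_tendsto:
  assumes mu: "\<And>k. 0 < \<mu> k" "\<And>k. 2 * \<mu> k * \<eta> \<le> 1" and mu0: "\<mu> \<longlonglongrightarrow> 0"
    and z: "z \<longlonglongrightarrow> z0"
  shows "(\<lambda>k. prox (\<mu> k) g (z k)) \<longlonglongrightarrow> z0"
proof -
  have "(\<lambda>k. prox (\<mu> k) g (z k) - z k) \<longlonglongrightarrow> 0"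
  proof (rule Lim_null_comparison)
    show "\<forall>\<^sub>F k in sequentially. norm (prox (\<mu> k) g (z k) - z k) \<le> 2 * \<mu> k * Lg"
      using norm_prox_diff_le[OF mu] by (intro always_eventually allI)
    show "(\<lambda>k. 2 * \<mu> k * Lg) \<longlonglongrightarrow> 0" using tendsto_mult[OF tendsto_mult[OF tendsto_const mu0] tendsto_const]
      by simp
  qed
  from tendsto_add[OF this z] show ?thesis by simp
qed

lemma moreau_grad_limit_subgradient:
  assumes mu: "\<And>k. 0 < \<mu> k" "\<And>k. 2 * \<mu> k * \<eta> \<le> 1" and mu0: "\<mu> \<longlonglongrightarrow> 0"
    and z: "z \<longlonglongrightarrow> z0" and w: "(\<lambda>k. moreau_grad (\<mu> k) g (z k)) \<longlonglongrightarrow> w"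
  shows "g z0 + w \<bullet> (u - z0) - \<eta> * (norm (u - z0))\<^sup>2 \<le> g u"
proof (rule LIMSEQ_le[OF _ tendsto_const])
  let ?p = "\<lambda>k. prox (\<mu> k) g (z k)"
  have p: "?p \<longlonglongrightarrow> z0" by (rule prox_tendsto[OF mu mu0 z])
  show "(\<lambda>k. g (?p k) + moreau_grad (\<mu> k) g (z k) \<bullet> (u - ?p k) - \<eta> * (norm (u - ?p k))\<^sup>2)
      \<longlonglongrightarrow> g z0 + w \<bullet> (u - z0) - \<eta> * (norm (u - z0))\<^sup>2"
    by (intro tendsto_intros isCont_tendsto_compose[OF isCont_g p] w p)
  show "\<exists>N. \<forall>k\<ge>N. g (?p k) + moreau_grad (\<mu> k) g (z k) \<bullet> (u - ?p k) - \<eta> * (norm (u - ?p k))\<^sup>2 \<le> g u"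
    using prox_subgradient_ineq[OF mu] by blast
qed

end

section \<open>Frechet subgradients\<close>

lemma frechet_subdiff_of_quadratic_minorant:
  fixes J :: "'a::real_inner \<Rightarrow> ereal"
  assumes Jx: "J x = ereal J0" and K: "0 \<le> K"
    and minorant: "\<And>y. ereal (J0 + v \<bullet> (y - x) - K * (norm (y - x))\<^sup>2) \<le> J y"
  shows "v \<in> frechet_subdiff J x"
  unfolding frechet_subdiff_def
proof (intro CollectI conjI)
  show "J x < \<infinity>" using Jx by simp
  let ?Q = "\<lambda>y. (J y - J x - ereal (v \<bullet> (y - x))) / ereal (norm (y - x))"
  show "0 \<le> (SUP \<epsilon>\<in>{0<..}. INF y\<in>{y. 0 < norm (y - x) \<and> norm (y - x) < \<epsilon>}. ?Q y)"
  proof (rule ereal_le_epsilon2)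
    fix \<delta> :: real assume \<delta>: "0 < \<delta>"
    define e where "e = \<delta> / (K + 1)"
    have e: "e > 0" "K * e \<le> \<delta>" unfolding e_def using \<delta> K by (simp_all add: field_simps)
    have "ereal (- \<delta>) \<le> ?Q y" if y: "0 < norm (y - x)" "norm (y - x) < e" for y
    proof (cases "J y")
      case (real r)
      have "- K * (norm (y - x))\<^sup>2 \<le> r - J0 - v \<bullet> (y - x)" using minorant[of y] real by simp
      then have "- K * (norm (y - x))\<^sup>2 / norm (y - x) \<le> (r - J0 - v \<bullet> (y - x)) / norm (y - x)"
        by (rule divide_right_mono) simp
      moreover have "- K * (norm (y - x))\<^sup>2 / norm (y - x) = - K * norm (y - x)"
        using y by (simp add: power2_eq_square)
      moreover have "K * norm (y - x) \<le> K * e" using y K by (simp add: mult_left_mono)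
      ultimately have "- \<delta> \<le> (r - J0 - v \<bullet> (y - x)) / norm (y - x)" using e by linarith
      then show ?thesis using real Jx y by simp
    qed (use Jx y minorant[of y] in simp_all)
    then have "ereal (- \<delta>) \<le> (INF y\<in>{y. 0 < norm (y - x) \<and> norm (y - x) < e}. ?Q y)"
      by (intro INF_greatest) auto
    also have "\<dots> \<le> (SUP \<epsilon>\<in>{0<..}. INF y\<in>{y. 0 < norm (y - x) \<and> norm (y - x) < \<epsilon>}. ?Q y)"
      by (rule SUP_upper) (use e in simp)
    finally show "0 \<le> (SUP \<epsilon>\<in>{0<..}. INF y\<in>{y. 0 < norm (y - x) \<and> norm (y - x) < \<epsilon>}. ?Q y) + ereal \<delta>"
      by (cases "(SUP \<epsilon>\<in>{0<..}. INF y\<in>{y. 0 < norm (y - x) \<and> norm (y - x) < \<epsilon>}. ?Q y)") auto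
  qed
qed

text \<open>Moving from \<open>x\<close> in the direction \<open>v - u\<close> shows that the difference quotients of a
  differentiable \<open>f\<close> against any \<open>v \<noteq> u\<close> stay below \<open>-\<bar>u - v\<bar>/2\<close> near \<open>x\<close>.\<close>

lemma frechet_subdiff_of_differentiable:
  fixes f :: "'a::real_inner \<Rightarrow> real"
  assumes f: "(f has_derivative (\<lambda>h. u \<bullet> h)) (at x)"
    and v: "v \<in> frechet_subdiff (\<lambda>y. ereal (f y)) x"
  shows "v = u"
proof (rule ccontr)
  assume "v \<noteq> u"
  define d where "d = u - v"
  define nd where "nd = norm d"
  have nd: "nd > 0" unfolding nd_def d_def using \<open>v \<noteq> u\<close> by simp
  let ?Q = "\<lambda>y. (ereal (f y) - ereal (f x) - ereal (v \<bullet> (y - x))) / ereal (norm (y - x))"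
  have "((\<lambda>y. norm ((f y - f x) - u \<bullet> (y - x)) / norm (y - x)) \<longlongrightarrow> 0) (at x)"
    using f unfolding has_derivative_iff_norm by simp
  then have "\<forall>\<^sub>F y in at x. norm ((f y - f x) - u \<bullet> (y - x)) / norm (y - x) < nd / 2"
    using nd by (intro order_tendstoD(2)) auto
  then obtain \<delta> where \<delta>: "\<delta> > 0"
    "\<And>y. y \<noteq> x \<Longrightarrow> dist y x < \<delta> \<Longrightarrow> norm ((f y - f x) - u \<bullet> (y - x)) / norm (y - x) < nd / 2"
    unfolding eventually_at by auto
  have "(INF y\<in>{y. 0 < norm (y - x) \<and> norm (y - x) < e}. ?Q y) \<le> ereal (- nd / 2)" if e: "e > 0" for e
  proof -
    define t where "t = min e \<delta> / (2 * nd)"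
    have t: "t > 0" unfolding t_def using e \<delta> nd by simp
    define y where "y = x - t *\<^sub>R d"
    have ny: "norm (y - x) = t * nd" unfolding y_def nd_def using t by simp
    have ny2: "t * nd = min e \<delta> / 2" unfolding t_def using nd by simp
    have y_in: "y \<in> {y. 0 < norm (y - x) \<and> norm (y - x) < e}" using ny ny2 t nd e \<delta> by auto
    have "y \<noteq> x" "dist y x < \<delta>" using ny ny2 t nd e \<delta> by (auto simp: dist_norm)
    then have bd: "norm ((f y - f x) - u \<bullet> (y - x)) / norm (y - x) < nd / 2" by (rule \<delta>(2))
    have "d \<bullet> (y - x) = - t * nd\<^sup>2" unfolding y_def nd_def by (simp add: power2_norm_eq_inner)
    moreover have "f y - f x - v \<bullet> (y - x) = (f y - f x - u \<bullet> (y - x)) + d \<bullet> (y - x)"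
      unfolding d_def by (simp add: inner_diff_left)
    ultimately have "(f y - f x - v \<bullet> (y - x)) / norm (y - x) = (f y - f x - u \<bullet> (y - x)) / norm (y - x) - nd"
      using ny t nd by (simp add: field_simps power2_eq_square)
    also have "\<dots> \<le> norm ((f y - f x) - u \<bullet> (y - x)) / norm (y - x) - nd"
      by (simp add: divide_right_mono)
    finally have "(f y - f x - v \<bullet> (y - x)) / norm (y - x) \<le> - nd / 2" using bd by linarith
    then have "?Q y \<le> ereal (- nd / 2)" using ny t nd by simp
    then show ?thesis by (rule INF_lower2[OF y_in])
  qed
  then have "(SUP \<epsilon>\<in>{0<..}. INF y\<in>{y. 0 < norm (y - x) \<and> norm (y - x) < \<epsilon>}. ?Q y) \<le> ereal (- nd / 2)"
    by (intro SUP_least) auto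
  moreover have "0 \<le> (SUP \<epsilon>\<in>{0<..}. INF y\<in>{y. 0 < norm (y - x) \<and> norm (y - x) < \<epsilon>}. ?Q y)"
    using v unfolding frechet_subdiff_def by simp
  ultimately have "0 \<le> ereal (- nd / 2)" by (rule order_trans[rotated])
  then show False using nd by simp
qed

lemma grad_eqI:
  fixes f :: "'a::real_inner \<Rightarrow> real"
  assumes "(f has_derivative (\<lambda>h. a \<bullet> h)) (at x)"
  shows "grad f x = a"
  unfolding grad_def
proof (rule the_equality)
  fix v assume "(f has_derivative (\<lambda>h. v \<bullet> h)) (at x)"
  from has_derivative_unique[OF this assms] have "v \<bullet> (v - a) = a \<bullet> (v - a)" by metis
  then have "(v - a) \<bullet> (v - a) = 0" by (simp add: inner_diff_left)
  then show "v = a" by simp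
qed (rule assms)

section \<open>Smoothed composite objective\<close>

locale smoothed_composite = weakly_convex_lipschitz g \<eta> Lg
  for g :: "'z::euclidean_space \<Rightarrow> real" and \<eta> Lg +
  fixes S :: "'x::euclidean_space \<Rightarrow> 'z" and S' :: "'x \<Rightarrow> 'x \<Rightarrow>\<^sub>L 'z" and LS LD :: real
  assumes S_deriv: "\<And>y. (S has_derivative blinfun_apply (S' y)) (at y)"
    and S_lipschitz: "LS-lipschitz_on UNIV S" and S'_lipschitz: "LD-lipschitz_on UNIV S'"
begin

lemma LD_nonneg: "0 \<le> LD"
  using S'_lipschitz lipschitz_on_nonneg by blast

lemma S_lipschitzD: "norm (S a - S b) \<le> LS * norm (a - b)"
  using lipschitz_onD[OF S_lipschitz, of a b] by (simp add: dist_norm)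

lemma isCont_S: "isCont S z"
  using lipschitz_on_continuous_on[OF S_lipschitz] by (simp add: continuous_on_eq_continuous_at)

lemma isCont_S': "isCont S' z"
  using lipschitz_on_continuous_on[OF S'_lipschitz] by (simp add: continuous_on_eq_continuous_at)

lemma S_taylor: "norm (S y - S x - S' x (y - x)) \<le> LD * (norm (y - x))\<^sup>2"
proof -
  have "norm (S y - S x - S' x (y - x)) \<le> norm (y - x) * (LD * norm (y - x))"
  proof (rule differentiable_bound_linearization[where S = "closed_segment x y"])
    show "x + t *\<^sub>R (y - x) \<in> closed_segment x y" if "t \<in> {0..1}" for t
      using that unfolding in_segment(1) by (intro exI[of _ t]) (auto simp: algebra_simps)
    show "(S has_derivative blinfun_apply (S' \<xi>)) (at \<xi> within closed_segment x y)" for \<xi>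
      by (rule has_derivative_at_withinI[OF S_deriv])
    show "onorm (blinfun_apply (S' \<xi>) - blinfun_apply (S' x)) \<le> LD * norm (y - x)"
      if "\<xi> \<in> closed_segment x y" for \<xi>
    proof -
      have "onorm (blinfun_apply (S' \<xi>) - blinfun_apply (S' x)) = norm (S' \<xi> - S' x)"
        by (simp add: norm_blinfun.rep_eq minus_blinfun.rep_eq fun_diff_def)
      also have "\<dots> \<le> LD * norm (\<xi> - x)"
        using lipschitz_onD[OF S'_lipschitz, of \<xi> x] by (simp add: dist_norm)
      also have "\<dots> \<le> LD * norm (y - x)"
        using segment_bound(1)[OF that] LD_nonneg by (simp add: mult_left_mono)
      finally show ?thesis .
    qed
  qed simp
  then show ?thesis by (simp add: power2_eq_square algebra_simps)
qed

context
  fixes \<mu> :: real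
  assumes mu: "0 < \<mu>" "2 * \<mu> * \<eta> \<le> 1"
begin

lemma composite_env_taylor:
  "\<bar>moreau_env \<mu> g (S y) - moreau_env \<mu> g (S x) - moreau_grad \<mu> g (S x) \<bullet> S' x (y - x)\<bar>
     \<le> (4 * LS\<^sup>2 / \<mu> + 2 * Lg * LD) * (norm (y - x))\<^sup>2"
proof -
  define w where "w = moreau_grad \<mu> g (S x)"
  define R where "R = S y - S x - S' x (y - x)"
  define N where "N = (norm (y - x))\<^sup>2"
  have "4 / \<mu> * (norm (S y - S x))\<^sup>2 \<le> 4 / \<mu> * (LS * norm (y - x))\<^sup>2"
    using S_lipschitzD[of y x] mu by (intro mult_left_mono power_mono) simp_all
  then have env: "\<bar>moreau_env \<mu> g (S y) - moreau_env \<mu> g (S x) - w \<bullet> (S y - S x)\<bar> \<le> 4 * LS\<^sup>2 / \<mu> * N"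
    using moreau_env_taylor[OF mu, of "S y" "S x"] unfolding w_def N_def by (simp add: power_mult_distrib)
  have "\<bar>w \<bullet> R\<bar> \<le> norm w * norm R" by (rule Cauchy_Schwarz_ineq2)
  also have "\<dots> \<le> (2 * Lg) * (LD * N)"
    unfolding w_def R_def N_def using norm_moreau_grad_le[OF mu] S_taylor Lg_nonneg by (intro mult_mono) auto
  finally have "\<bar>w \<bullet> R\<bar> \<le> 2 * Lg * LD * N" by simp
  moreover have "w \<bullet> (S y - S x) = w \<bullet> S' x (y - x) + w \<bullet> R"
    unfolding R_def by (simp add: inner_diff_right)
  ultimately show ?thesis using env unfolding w_def N_def by (simp add: algebra_simps abs_le_iff)
qed

lemma composite_env_has_derivative:
  "((\<lambda>y. moreau_env \<mu> g (S y)) has_derivative (\<lambda>h. moreau_grad \<mu> g (S x) \<bullet> S' x h)) (at x)"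
  using diff_chain_at[OF S_deriv moreau_env_has_derivative[OF mu]] by (simp add: o_def)

lemma grad_composite_env_inner:
  "grad (\<lambda>y. moreau_env \<mu> g (S y)) x \<bullet> h = moreau_grad \<mu> g (S x) \<bullet> S' x h"
proof -
  have lin: "linear (blinfun_apply (S' x))" by (simp add: blinfun.bounded_linear_right bounded_linear.linear)
  have adj: "adjoint (S' x) w \<bullet> h = w \<bullet> S' x h" for w h
    by (rule adjoint_clauses(2)[OF lin])
  have "((\<lambda>y. moreau_env \<mu> g (S y)) has_derivative
      (\<lambda>h. adjoint (blinfun_apply (S' x)) (moreau_grad \<mu> g (S x)) \<bullet> h)) (at x)"
    unfolding adj by (rule composite_env_has_derivative)
  then have "grad (\<lambda>y. moreau_env \<mu> g (S y)) x = adjoint (S' x) (moreau_grad \<mu> g (S x))"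
    by (rule grad_eqI)
  then show ?thesis by (simp add: adj)
qed

lemma norm_grad_composite_env_le: "norm (grad (\<lambda>y. moreau_env \<mu> g (S y)) x) \<le> 2 * Lg * norm (S' x)"
proof -
  define G where "G = grad (\<lambda>y. moreau_env \<mu> g (S y)) x"
  have "norm G * norm G = moreau_grad \<mu> g (S x) \<bullet> S' x G"
    unfolding G_def grad_composite_env_inner[symmetric] by (simp flip: power2_eq_square add: power2_norm_eq_inner)
  also have "\<dots> \<le> norm (moreau_grad \<mu> g (S x)) * norm (S' x G)" by (rule norm_cauchy_schwarz)
  also have "\<dots> \<le> (2 * Lg) * (norm (S' x) * norm G)"
    by (intro mult_mono norm_moreau_grad_le[OF mu] norm_blinfun) (auto simp: Lg_nonneg)
  finally have "norm G * norm G \<le> (2 * Lg * norm (S' x)) * norm G" by (simp add: algebra_simps)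
  then show ?thesis unfolding G_def by (rule le_of_mult_le_mult_self) (simp add: Lg_nonneg)
qed

lemma frechet_subdiff_composite_env:
  "frechet_subdiff (\<lambda>y. ereal (moreau_env \<mu> g (S y))) x = {grad (\<lambda>y. moreau_env \<mu> g (S y)) x}"
proof (intro set_eqI iffI)
  fix v assume "v \<in> frechet_subdiff (\<lambda>y. ereal (moreau_env \<mu> g (S y))) x"
  then show "v \<in> {grad (\<lambda>y. moreau_env \<mu> g (S y)) x}"
    using frechet_subdiff_of_differentiable composite_env_has_derivative
    unfolding grad_composite_env_inner[symmetric] by blast
next
  fix v assume v: "v \<in> {grad (\<lambda>y. moreau_env \<mu> g (S y)) x}"
  show "v \<in> frechet_subdiff (\<lambda>y. ereal (moreau_env \<mu> g (S y))) x"
  proof (rule frechet_subdiff_of_quadratic_minorant[OF refl])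
    show "0 \<le> 4 * LS\<^sup>2 / \<mu> + 2 * Lg * LD" using mu Lg_nonneg LD_nonneg by simp
    show "ereal (moreau_env \<mu> g (S x) + v \<bullet> (y - x) - (4 * LS\<^sup>2 / \<mu> + 2 * Lg * LD) * (norm (y - x))\<^sup>2)
        \<le> ereal (moreau_env \<mu> g (S y))" for y
      using composite_env_taylor[of y x] v unfolding abs_le_iff by (simp add: grad_composite_env_inner)
  qed
qed

end

text \<open>The Taylor bound for \<open>S\<close> turns the subgradient and normal inequalities into a quadratic
  minorant of \<open>g \<circ> S + \<iota>\<^sub>C\<close> at \<open>xs\<close>.\<close>

lemma stationary_of_subgradient_normal:
  assumes xs: "xs \<in> C"
    and subgrad: "\<And>u. g (S xs) + w \<bullet> (u - S xs) - \<eta> * (norm (u - S xs))\<^sup>2 \<le> g u"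
    and w: "norm w \<le> 2 * Lg"
    and M: "0 \<le> M" and normal: "\<And>y. y \<in> C \<Longrightarrow> - (w \<bullet> S' xs (y - xs)) \<le> M * (norm (y - xs))\<^sup>2"
  shows "0 \<in> frechet_subdiff (\<lambda>y. if y \<in> C then ereal (g (S y)) else \<infinity>) xs"
proof (rule frechet_subdiff_of_quadratic_minorant[of _ xs "g (S xs)"])
  define K where "K = M + 2 * Lg * LD + \<eta> * LS\<^sup>2"
  show "0 \<le> K" unfolding K_def using M Lg_nonneg LD_nonneg eta_pos by simp
  show "(if xs \<in> C then ereal (g (S xs)) else \<infinity>) = ereal (g (S xs))" using xs by simp
  show "ereal (g (S xs) + 0 \<bullet> (y - xs) - K * (norm (y - xs))\<^sup>2) \<le> (if y \<in> C then ereal (g (S y)) else \<infinity>)"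
    for y
  proof (cases "y \<in> C")
    case True
    define N where "N = (norm (y - xs))\<^sup>2"
    define R where "R = S y - S xs - S' xs (y - xs)"
    have "- (w \<bullet> R) \<le> norm w * norm R" using Cauchy_Schwarz_ineq2[of w R] by (simp add: abs_le_iff)
    also have "\<dots> \<le> (2 * Lg) * (LD * N)"
      unfolding R_def N_def using w S_taylor Lg_nonneg by (intro mult_mono) auto
    finally have wR: "- (w \<bullet> R) \<le> 2 * Lg * LD * N" by simp
    have "\<eta> * (norm (S y - S xs))\<^sup>2 \<le> \<eta> * (LS * norm (y - xs))\<^sup>2"
      using S_lipschitzD[of y xs] eta_pos by (intro mult_left_mono power_mono) auto
    then have SN: "\<eta> * (norm (S y - S xs))\<^sup>2 \<le> \<eta> * LS\<^sup>2 * N" unfolding N_def by (simp add: power_mult_distrib)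
    have "w \<bullet> (S y - S xs) = w \<bullet> S' xs (y - xs) + w \<bullet> R" unfolding R_def by (simp add: inner_diff_right)
    then have "g (S xs) - K * N \<le> g (S y)"
      using subgrad[of "S y"] normal[OF True] wR SN unfolding K_def N_def by (simp add: algebra_simps)
    then show ?thesis using True unfolding N_def by simp
  qed simp
qed

end

section \<open>The projected variable smoothing algorithm\<close>

locale projected_variable_smoothing = smoothed_composite g \<eta> Lg S S' LS LD
  for g :: "'z::euclidean_space \<Rightarrow> real" and \<eta> Lg and S :: "'x::euclidean_space \<Rightarrow> 'z" and S' LS LD +
  fixes C :: "'x set" and c \<rho> \<gamma>t \<alpha> :: real and x :: "nat \<Rightarrow> 'x" and \<gamma> \<mu> :: "nat \<Rightarrow> real"
    and Fn :: "nat \<Rightarrow> 'x \<Rightarrow> real"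
  assumes C_ne: "C \<noteq> {}" and C_closed: "closed C" and C_pr: "prox_regular C"
    and argmin_ne: "\<exists>y\<in>C. \<forall>w\<in>C. g (S y) \<le> g (S w)"
    and x1: "x 1 \<in> C"
    and c: "0 < c" "c < 1 / 2"
    and rho: "0 < \<rho>" "\<rho> < 1"
    and gt: "\<gamma>t > 0"
    and alpha: "\<alpha> \<ge> 1"
    and mu_def: "\<And>n. \<mu> n = 1 / (2 * \<eta>) * real n powr (- 1 / \<alpha>)"
    and Fn_def: "\<And>n. Fn n = (\<lambda>y. moreau_env (\<mu> n) g (S y))"
    and alg: "\<And>n. n \<ge> 1 \<Longrightarrow> \<exists>m::nat.
        \<gamma> n = \<rho> ^ m * \<gamma>t
      \<and> x (Suc n) \<in> proj C (x n - \<gamma> n *\<^sub>R grad (Fn n) (x n))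
      \<and> Fn n (x (Suc n)) \<le> Fn n (x n)
            - c * \<gamma> n * (norm ((1 / \<gamma> n) *\<^sub>R (x n - x (Suc n))))\<^sup>2
      \<and> (\<forall>k<m. \<exists>y \<in> proj C (x n - (\<rho> ^ k * \<gamma>t) *\<^sub>R grad (Fn n) (x n)).
            \<not> (Fn n y \<le> Fn n (x n)
                 - c * (\<rho> ^ k * \<gamma>t) * (norm ((1 / (\<rho> ^ k * \<gamma>t)) *\<^sub>R (x n - y)))\<^sup>2))"
begin

lemma mu_pos: "n \<ge> 1 \<Longrightarrow> 0 < \<mu> n"
  unfolding mu_def using eta_pos by simp

lemma mu_le: "n \<ge> 1 \<Longrightarrow> 2 * \<mu> n * \<eta> \<le> 1"
  unfolding mu_def using eta_pos alpha powr_mono[of "- 1 / \<alpha>" 0 "real n"] by simp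

lemma inverse_le_mu: "n \<ge> 1 \<Longrightarrow> 1 / (2 * \<eta> * real n) \<le> \<mu> n"
proof -
  assume n: "n \<ge> 1"
  have "- 1 \<le> - 1 / \<alpha>" using alpha by (simp add: field_simps)
  then have "real n powr (- 1) \<le> real n powr (- 1 / \<alpha>)" using n by (intro powr_mono) auto
  then have "1 / (2 * \<eta>) * (1 / real n) \<le> 1 / (2 * \<eta>) * real n powr (- 1 / \<alpha>)"
    using n eta_pos by (intro mult_left_mono) (auto simp: powr_neg_one)
  then show ?thesis unfolding mu_def by simp
qed

lemma mu_Suc_le: "n \<ge> 1 \<Longrightarrow> \<mu> (Suc n) \<le> \<mu> n"
  unfolding mu_def using eta_pos alpha by (intro mult_left_mono powr_mono2') auto

lemma mu_le_twice_Suc: "n \<ge> 1 \<Longrightarrow> \<mu> n \<le> 2 * \<mu> (Suc n)"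
proof -
  assume n: "n \<ge> 1"
  have "- 1 \<le> - 1 / \<alpha>" using alpha by (simp add: field_simps)
  then have "1 / 2 \<le> (2::real) powr (- 1 / \<alpha>)"
    using powr_mono[of "- 1" "- 1 / \<alpha>" 2] by (simp add: powr_neg_one)
  then have "1 / 2 * real n powr (- 1 / \<alpha>) \<le> 2 powr (- 1 / \<alpha>) * real n powr (- 1 / \<alpha>)"
    by (rule mult_right_mono) simp
  also have "\<dots> = real (2 * n) powr (- 1 / \<alpha>)" by (simp add: powr_mult)
  also have "\<dots> \<le> real (Suc n) powr (- 1 / \<alpha>)"
    using n alpha by (intro powr_mono2') auto
  finally show ?thesis unfolding mu_def using eta_pos by (simp add: field_simps)
qed

lemma mu_tendsto_0: "\<mu> \<longlonglongrightarrow> 0"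
proof -
  have "(\<lambda>n. real n powr (- 1 / \<alpha>)) \<longlonglongrightarrow> 0"
    using alpha by (intro tendsto_neg_powr filterlim_real_sequentially) simp
  from tendsto_mult[OF tendsto_const this, of "1 / (2 * \<eta>)"] show ?thesis
    unfolding mu_def[abs_def] by simp
qed

lemma iterate_in_C: "n \<ge> 1 \<Longrightarrow> x n \<in> C"
proof (induction n rule: nat_induct_at_least)
  case (Suc n)
  then show ?case using alg[of n] proj_in_set by blast
qed (use x1 in simp)

lemma step_pos: "n \<ge> 1 \<Longrightarrow> 0 < \<gamma> n"
  using alg rho gt by fastforce

lemma step_le: "n \<ge> 1 \<Longrightarrow> \<gamma> n \<le> \<gamma>t"
  using alg rho gt by (fastforce intro: mult_left_le_one_le power_le_one)

lemma grad_Fn_inner: "n \<ge> 1 \<Longrightarrow> grad (Fn n) z \<bullet> h = moreau_grad (\<mu> n) g (S z) \<bullet> S' z h"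
  unfolding Fn_def by (rule grad_composite_env_inner[OF mu_pos mu_le])

lemma norm_grad_Fn_le: "n \<ge> 1 \<Longrightarrow> norm (grad (Fn n) z) \<le> 2 * Lg * norm (S' z)"
  unfolding Fn_def by (rule norm_grad_composite_env_le[OF mu_pos mu_le])

lemma frechet_subdiff_Fn: "n \<ge> 1 \<Longrightarrow> frechet_subdiff (\<lambda>y. ereal (Fn n y)) z = {grad (Fn n) z}"
  unfolding Fn_def by (rule frechet_subdiff_composite_env[OF mu_pos mu_le])

definition smoothness :: "nat \<Rightarrow> real" where
  "smoothness n = 4 * LS\<^sup>2 / \<mu> n + 2 * Lg * LD"

definition smoothness_rate :: real where
  "smoothness_rate = 8 * LS\<^sup>2 * \<eta> + 2 * Lg * LD + 1"

lemma smoothness_rate_pos: "smoothness_rate > 0"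
  unfolding smoothness_rate_def using eta_pos Lg_nonneg LD_nonneg by (simp add: add_nonneg_pos)

lemma smoothness_le: "n \<ge> 1 \<Longrightarrow> smoothness n \<le> smoothness_rate * real n"
proof -
  assume n: "n \<ge> 1"
  have "1 / \<mu> n \<le> 2 * \<eta> * real n"
    using inverse_le_mu[OF n] mu_pos[OF n] eta_pos n by (simp add: field_simps)
  then have "4 * LS\<^sup>2 * (1 / \<mu> n) \<le> 4 * LS\<^sup>2 * (2 * \<eta> * real n)"
    by (rule mult_left_mono) simp
  then have "4 * LS\<^sup>2 / \<mu> n \<le> 8 * LS\<^sup>2 * \<eta> * real n" by simp
  moreover have "2 * Lg * LD \<le> 2 * Lg * LD * real n"
    using n Lg_nonneg LD_nonneg mult_left_mono[of 1 "real n" "2 * Lg * LD"] by simp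
  ultimately show ?thesis unfolding smoothness_def smoothness_rate_def by (simp add: algebra_simps)
qed

lemma Fn_descent: "n \<ge> 1 \<Longrightarrow> Fn n y \<le> Fn n z + grad (Fn n) z \<bullet> (y - z) + smoothness n * (norm (y - z))\<^sup>2"
  using composite_env_taylor[OF mu_pos mu_le, of n y z] grad_Fn_inner[of n z "y - z"]
  unfolding Fn_def smoothness_def by (simp add: abs_le_iff)

text \<open>Descent lemma plus the variational inequality of the projection.\<close>

lemma armijo_test_succeeds:
  assumes n: "n \<ge> 1" and t: "0 < t" "t * smoothness n \<le> 1 / 2 - c"
    and y: "y \<in> proj C (x n - t *\<^sub>R grad (Fn n) (x n))"
  shows "Fn n y \<le> Fn n (x n) - c * t * (norm ((1 / t) *\<^sub>R (x n - y)))\<^sup>2"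
proof -
  define G where "G = grad (Fn n) (x n)"
  define N where "N = (norm (x n - y))\<^sup>2"
  have "2 * (((x n - t *\<^sub>R G) - y) \<bullet> (x n - y)) \<le> N"
    using proj_variational_ineq[OF y iterate_in_C[OF n]] unfolding N_def G_def .
  then have proj: "t * (G \<bullet> (y - x n)) \<le> - N / 2"
    unfolding N_def by (simp add: inner_diff_left inner_diff_right power2_norm_eq_inner algebra_simps)
  have "t * Fn n y \<le> t * (Fn n (x n) + G \<bullet> (y - x n) + smoothness n * N)"
    using Fn_descent[OF n, of y "x n"] t unfolding G_def N_def by (simp add: norm_minus_commute)
  also have "\<dots> = t * Fn n (x n) + t * (G \<bullet> (y - x n)) + (t * smoothness n) * N"
    by (simp add: algebra_simps)
  also have "(t * smoothness n) * N \<le> (1 / 2 - c) * N" using t(2) unfolding N_def by (rule mult_right_mono) simp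
  finally have "t * Fn n y \<le> t * Fn n (x n) - c * N" using proj by (simp add: algebra_simps)
  moreover have "t * (Fn n (x n) - c * t * (N / t\<^sup>2)) = t * Fn n (x n) - c * N"
    using t by (simp add: field_simps power2_eq_square)
  ultimately have "t * Fn n y \<le> t * (Fn n (x n) - c * t * (N / t\<^sup>2))" by linarith
  then have "Fn n y \<le> Fn n (x n) - c * t * (N / t\<^sup>2)" using t(1) by (rule mult_left_le_imp_le)
  then show ?thesis unfolding N_def using t by (simp add: power_divide)
qed

definition step_floor :: real where
  "step_floor = min \<gamma>t (\<rho> * (1 / 2 - c) / smoothness_rate)"

lemma step_floor_pos: "step_floor > 0"
  unfolding step_floor_def using gt rho c smoothness_rate_pos by simp

text \<open>Backtracking stops at the latest one step after the trial step falls below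
  \<open>(1/2 - c) / smoothness n\<close>, and \<open>smoothness n\<close> grows linearly.\<close>

lemma step_ge: "n \<ge> 1 \<Longrightarrow> step_floor / real n \<le> \<gamma> n"
proof -
  assume n: "n \<ge> 1"
  obtain m where m: "\<gamma> n = \<rho> ^ m * \<gamma>t"
    and fail: "\<forall>k<m. \<exists>y \<in> proj C (x n - (\<rho> ^ k * \<gamma>t) *\<^sub>R grad (Fn n) (x n)).
      \<not> (Fn n y \<le> Fn n (x n) - c * (\<rho> ^ k * \<gamma>t) * (norm ((1 / (\<rho> ^ k * \<gamma>t)) *\<^sub>R (x n - y)))\<^sup>2)"
    using alg[OF n] by blast
  have rn: "real n \<ge> 1" using n by simp
  show ?thesis
  proof (cases m)
    case 0
    have "step_floor / real n \<le> step_floor" using step_floor_pos rn by (simp add: divide_le_eq)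
    also have "\<dots> \<le> \<gamma>t" unfolding step_floor_def by simp
    finally show ?thesis using m 0 by simp
  next
    case (Suc k)
    define t where "t = \<rho> ^ k * \<gamma>t"
    have t: "0 < t" unfolding t_def using rho gt by simp
    obtain y where "y \<in> proj C (x n - t *\<^sub>R grad (Fn n) (x n))"
      "\<not> (Fn n y \<le> Fn n (x n) - c * t * (norm ((1 / t) *\<^sub>R (x n - y)))\<^sup>2)"
      using fail Suc unfolding t_def by blast
    then have "1 / 2 - c < t * smoothness n" using armijo_test_succeeds[OF n t] by force
    also have "\<dots> \<le> t * (smoothness_rate * real n)" using smoothness_le[OF n] t by simp
    finally have "(1 / 2 - c) / (smoothness_rate * real n) \<le> t"
      using smoothness_rate_pos rn by (simp add: field_simps)
    then have "\<rho> * ((1 / 2 - c) / (smoothness_rate * real n)) \<le> \<rho> * t"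
      using rho by (intro mult_left_mono) auto
    also have "\<rho> * t = \<gamma> n" using m Suc unfolding t_def by simp
    finally have "\<rho> * ((1 / 2 - c) / (smoothness_rate * real n)) \<le> \<gamma> n" .
    moreover have "step_floor / real n \<le> \<rho> * (1 / 2 - c) / smoothness_rate / real n"
      unfolding step_floor_def using rn by (intro divide_right_mono) auto
    ultimately show ?thesis by simp
  qed
qed

definition residual :: "nat \<Rightarrow> real" where
  "residual n = norm (x n - x (Suc n)) / \<gamma> n"

lemma stat_measure_le_residual: "n \<ge> 1 \<Longrightarrow> stat_measure (\<gamma> n) (Fn n) C (x n) \<le> residual n"
proof -
  assume n: "n \<ge> 1"
  have "x (Suc n) \<in> proj C (x n - \<gamma> n *\<^sub>R grad (Fn n) (x n))" using alg[OF n] by blast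
  then have "(1 / \<gamma> n) *\<^sub>R (x n - x (Suc n)) \<in> {(1 / \<gamma> n) *\<^sub>R (x n - p) | p v.
      v \<in> frechet_subdiff (\<lambda>x. ereal (Fn n x)) (x n) \<and> p \<in> proj C (x n - \<gamma> n *\<^sub>R v)}"
    unfolding frechet_subdiff_Fn[OF n] by blast
  then have "stat_measure (\<gamma> n) (Fn n) C (x n) \<le> dist 0 ((1 / \<gamma> n) *\<^sub>R (x n - x (Suc n)))"
    unfolding stat_measure_def by (rule infdist_le)
  also have "\<dots> = residual n" unfolding residual_def using step_pos[OF n] by (simp add: dist_norm)
  finally show ?thesis .
qed

lemma sufficient_decrease: "n \<ge> 1 \<Longrightarrow> c * \<gamma> n * (residual n)\<^sup>2 \<le> Fn n (x n) - Fn n (x (Suc n))"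
proof -
  assume n: "n \<ge> 1"
  have "norm ((1 / \<gamma> n) *\<^sub>R (x n - x (Suc n))) = residual n"
    unfolding residual_def using step_pos[OF n] by simp
  then show ?thesis using alg[OF n] by force
qed

lemma Fn_Suc_le: "n \<ge> 1 \<Longrightarrow> Fn (Suc n) y \<le> Fn n y + 4 * Lg\<^sup>2 * (\<mu> n - \<mu> (Suc n))"
proof -
  assume n: "n \<ge> 1"
  have "Fn (Suc n) y \<le> Fn n y + 2 * Lg\<^sup>2 * (\<mu> n / \<mu> (Suc n)) * (\<mu> n - \<mu> (Suc n))"
    unfolding Fn_def using moreau_env_le_of_le[OF mu_pos[OF n] mu_le[OF n] mu_pos mu_Suc_le[OF n]] by simp
  also have "\<mu> n / \<mu> (Suc n) \<le> 2"
    using mu_le_twice_Suc[OF n] mu_pos[of "Suc n"] by (simp add: divide_le_eq)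
  then have "2 * Lg\<^sup>2 * (\<mu> n / \<mu> (Suc n)) * (\<mu> n - \<mu> (Suc n)) \<le> 2 * Lg\<^sup>2 * 2 * (\<mu> n - \<mu> (Suc n))"
    using mu_Suc_le[OF n] by (intro mult_right_mono mult_left_mono) auto
  finally show ?thesis by simp
qed

lemma Fn_lower_bound: "\<exists>B. \<forall>n\<ge>1. \<forall>y\<in>C. B \<le> Fn n y"
proof -
  obtain y0 where y0: "\<And>y. y \<in> C \<Longrightarrow> g (S y0) \<le> g (S y)" using argmin_ne by blast
  have "g (S y0) - Lg\<^sup>2 / \<eta> \<le> Fn n y" if n: "n \<ge> 1" and y: "y \<in> C" for n y
  proof -
    have "2 * \<mu> n * Lg\<^sup>2 \<le> 1 / \<eta> * Lg\<^sup>2"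
      using mu_le[OF n] eta_pos by (intro mult_right_mono) (simp_all add: field_simps)
    then show ?thesis
      using moreau_env_ge[OF mu_pos[OF n] mu_le[OF n], of "S y"] y0[OF y] unfolding Fn_def by simp
  qed
  then show ?thesis by blast
qed

lemma weighted_residual_sum_le:
  "c * (\<Sum>n<N. \<gamma> (Suc n) * (residual (Suc n))\<^sup>2)
     \<le> Fn 1 (x 1) - Fn (Suc N) (x (Suc N)) + 4 * Lg\<^sup>2 * (\<mu> 1 - \<mu> (Suc N))"
proof (induction N)
  case (Suc N)
  have "c * (\<gamma> (Suc N) * (residual (Suc N))\<^sup>2) \<le> Fn (Suc N) (x (Suc N)) - Fn (Suc N) (x (Suc (Suc N)))"
    using sufficient_decrease[of "Suc N"] by (simp add: algebra_simps)
  moreover have "Fn (Suc (Suc N)) (x (Suc (Suc N)))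
      \<le> Fn (Suc N) (x (Suc (Suc N))) + 4 * Lg\<^sup>2 * (\<mu> (Suc N) - \<mu> (Suc (Suc N)))"
    by (rule Fn_Suc_le) simp
  ultimately show ?case using Suc.IH by (simp add: algebra_simps)
qed simp

lemma summable_weighted_residual: "summable (\<lambda>n. \<gamma> (Suc n) * (residual (Suc n))\<^sup>2)"
proof -
  obtain B where B: "\<And>n y. n \<ge> 1 \<Longrightarrow> y \<in> C \<Longrightarrow> B \<le> Fn n y" using Fn_lower_bound by blast
  have "c * (\<Sum>n<N. \<gamma> (Suc n) * (residual (Suc n))\<^sup>2) \<le> Fn 1 (x 1) - B + 4 * Lg\<^sup>2 * \<mu> 1" for N
  proof -
    have "0 \<le> 4 * Lg\<^sup>2 * \<mu> (Suc N)" using mu_pos[of "Suc N"] by simp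
    moreover have "B \<le> Fn (Suc N) (x (Suc N))" using B iterate_in_C[of "Suc N"] by simp
    ultimately show ?thesis using weighted_residual_sum_le[of N] by (simp add: algebra_simps)
  qed
  then have "(\<Sum>n<N. \<gamma> (Suc n) * (residual (Suc n))\<^sup>2) \<le> (Fn 1 (x 1) - B + 4 * Lg\<^sup>2 * \<mu> 1) / c" for N
    using c by (simp add: field_simps)
  moreover have "0 \<le> \<gamma> (Suc n) * (residual (Suc n))\<^sup>2" for n using step_pos[of "Suc n"] by simp
  ultimately show ?thesis by (intro summableI_nonneg_bounded)
qed

text \<open>Since \<open>\<gamma> n \<ge> step_floor / n\<close>, a residual bounded away from \<open>0\<close> would make the harmonic
  series converge.\<close>

lemma residual_frequently_small:
  assumes "\<epsilon> > 0" shows "\<exists>n\<ge>N. residual n < \<epsilon>"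
proof (rule ccontr)
  assume "\<not> (\<exists>n\<ge>N. residual n < \<epsilon>)"
  then have ge: "\<And>n. n \<ge> N \<Longrightarrow> \<epsilon> \<le> residual n" by (meson not_le)
  have "summable (\<lambda>n. (step_floor * \<epsilon>\<^sup>2) * inverse (real (Suc n)))"
  proof (rule summable_comparison_test'[OF summable_weighted_residual])
    fix n assume "n \<ge> N"
    then have "\<epsilon>\<^sup>2 \<le> (residual (Suc n))\<^sup>2" using ge[of "Suc n"] assms by (intro power_mono) auto
    moreover have "step_floor / real (Suc n) \<le> \<gamma> (Suc n)" by (rule step_ge) simp
    ultimately have "(step_floor / real (Suc n)) * \<epsilon>\<^sup>2 \<le> \<gamma> (Suc n) * (residual (Suc n))\<^sup>2"
      using step_floor_pos step_pos[of "Suc n"] by (intro mult_mono) auto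
    then show "norm ((step_floor * \<epsilon>\<^sup>2) * inverse (real (Suc n))) \<le> \<gamma> (Suc n) * (residual (Suc n))\<^sup>2"
      using step_floor_pos by (simp add: field_simps)
  qed
  then have "summable (\<lambda>n. inverse (real (Suc n)))" using step_floor_pos assms by simp
  then have "summable (\<lambda>n. inverse (real n))" by (rule iffD1[OF summable_Suc_iff])
  then show False using not_summable_harmonic[where 'a=real] by simp
qed

lemma liminf_stat_measure_eq_0: "liminf (\<lambda>n. ereal (stat_measure (\<gamma> n) (Fn n) C (x n))) = 0"
proof (rule antisym)
  show "0 \<le> liminf (\<lambda>n. ereal (stat_measure (\<gamma> n) (Fn n) C (x n)))"
    by (rule Liminf_bounded) (simp add: stat_measure_def infdist_nonneg)
  have "(INF m\<in>{N..}. ereal (stat_measure (\<gamma> m) (Fn m) C (x m))) \<le> 0" for N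
  proof (rule ereal_le_epsilon2)
    fix e :: real assume e: "0 < e"
    obtain n where n: "n \<ge> max N 1" "residual n < e" using residual_frequently_small[OF e] by blast
    then have "ereal (stat_measure (\<gamma> n) (Fn n) C (x n)) \<le> 0 + ereal e"
      using stat_measure_le_residual[of n] by simp
    then show "(INF m\<in>{N..}. ereal (stat_measure (\<gamma> m) (Fn m) C (x m))) \<le> 0 + ereal e"
      by (rule INF_lower2[rotated]) (use n in simp)
  qed
  then show "liminf (\<lambda>n. ereal (stat_measure (\<gamma> n) (Fn n) C (x n))) \<le> 0"
    unfolding liminf_SUP_INF by (rule SUP_least)
qed

lemma proj_points_tendsto:
  assumes nk: "\<And>k. nk k \<ge> 1" and X: "(\<lambda>k. x (nk k)) \<longlonglongrightarrow> xs"
    and A: "(\<lambda>k. (1 / \<gamma> (nk k)) *\<^sub>R (x (nk k) - P k)) \<longlonglongrightarrow> 0"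
  shows "P \<longlonglongrightarrow> xs"
proof -
  have "(\<lambda>k. x (nk k) - P k) \<longlonglongrightarrow> 0"
  proof (rule Lim_null_comparison)
    have "norm (x (nk k) - P k) = \<gamma> (nk k) * norm ((1 / \<gamma> (nk k)) *\<^sub>R (x (nk k) - P k))" for k
      using step_pos[OF nk[of k]] by simp
    also have "\<dots> k \<le> \<gamma>t * norm ((1 / \<gamma> (nk k)) *\<^sub>R (x (nk k) - P k))" for k
      using step_le[OF nk] by (intro mult_right_mono) auto
    finally show "\<forall>\<^sub>F k in sequentially. norm (x (nk k) - P k) \<le> \<gamma>t * norm ((1 / \<gamma> (nk k)) *\<^sub>R (x (nk k) - P k))"
      by (intro always_eventually allI)
    show "(\<lambda>k. \<gamma>t * norm ((1 / \<gamma> (nk k)) *\<^sub>R (x (nk k) - P k))) \<longlonglongrightarrow> 0"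
      using tendsto_mult[OF tendsto_const tendsto_norm[OF A], of \<gamma>t] by simp
  qed
  from tendsto_diff[OF X this] show ?thesis by simp
qed

text \<open>\<open>p\<close> is the projection of \<open>p + \<gamma> n \<zeta>\<close> with \<open>\<zeta> = (x n - p) / \<gamma> n - grad (Fn n) (x n)\<close>, so the
  proximal normal inequality applies to \<open>\<zeta>\<close>.\<close>

lemma proj_step_normal_ineq:
  assumes n: "n \<ge> 1" and p: "p \<in> proj C (x n - \<gamma> n *\<^sub>R grad (Fn n) (x n))"
    and normal: "\<forall>t>0. \<forall>v. p \<in> proj C (p + t *\<^sub>R v) \<longrightarrow>
      (\<forall>y\<in>C. 2 * R * (v \<bullet> (y - p)) \<le> norm v * (norm (y - p))\<^sup>2)"
    and y: "y \<in> C"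
  shows "2 * R * ((1 / \<gamma> n) *\<^sub>R (x n - p) \<bullet> (y - p) - moreau_grad (\<mu> n) g (S (x n)) \<bullet> S' (x n) (y - p))
    \<le> (norm ((1 / \<gamma> n) *\<^sub>R (x n - p)) + 2 * Lg * norm (S' (x n))) * (norm (y - p))\<^sup>2"
proof -
  define a where "a = (1 / \<gamma> n) *\<^sub>R (x n - p)"
  define \<zeta> where "\<zeta> = a - grad (Fn n) (x n)"
  have "p + \<gamma> n *\<^sub>R \<zeta> = x n - \<gamma> n *\<^sub>R grad (Fn n) (x n)"
    unfolding \<zeta>_def a_def using step_pos[OF n] by (simp add: algebra_simps)
  then have "p \<in> proj C (p + \<gamma> n *\<^sub>R \<zeta>)" using p by simp
  with normal step_pos[OF n] y have "2 * R * (\<zeta> \<bullet> (y - p)) \<le> norm \<zeta> * (norm (y - p))\<^sup>2" by blast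
  also have "norm \<zeta> \<le> norm a + norm (grad (Fn n) (x n))" unfolding \<zeta>_def by (rule norm_triangle_ineq4)
  then have "norm \<zeta> \<le> norm a + 2 * Lg * norm (S' (x n))" using norm_grad_Fn_le[OF n, of "x n"] by linarith
  then have "norm \<zeta> * (norm (y - p))\<^sup>2 \<le> (norm a + 2 * Lg * norm (S' (x n))) * (norm (y - p))\<^sup>2"
    by (rule mult_right_mono) simp
  finally show ?thesis unfolding \<zeta>_def a_def by (simp add: inner_diff_left grad_Fn_inner[OF n])
qed

lemma limiting_normal_ineq:
  assumes nk: "\<And>k. nk k \<ge> 1" and X: "(\<lambda>k. x (nk k)) \<longlonglongrightarrow> xs" and xs: "xs \<in> C"
    and P: "\<And>k. P k \<in> proj C (x (nk k) - \<gamma> (nk k) *\<^sub>R grad (Fn (nk k)) (x (nk k)))"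
    and P_lim: "P \<longlonglongrightarrow> xs"
    and A: "(\<lambda>k. (1 / \<gamma> (nk k)) *\<^sub>R (x (nk k) - P k)) \<longlonglongrightarrow> 0"
    and W: "(\<lambda>k. moreau_grad (\<mu> (nk k)) g (S (x (nk k)))) \<longlonglongrightarrow> w"
  shows "\<exists>M\<ge>0. \<forall>y\<in>C. - (w \<bullet> S' xs (y - xs)) \<le> M * (norm (y - xs))\<^sup>2"
proof -
  define a where "a k = (1 / \<gamma> (nk k)) *\<^sub>R (x (nk k) - P k)" for k
  define W' where "W' k = moreau_grad (\<mu> (nk k)) g (S (x (nk k)))" for k
  obtain R where R: "R > 0" and normal: "\<forall>p\<in>C. norm (p - xs) < R \<longrightarrow> (\<forall>t>0. \<forall>v. p \<in> proj C (p + t *\<^sub>R v) \<longrightarrow>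
      (\<forall>y\<in>C. 2 * R * (v \<bullet> (y - p)) \<le> norm v * (norm (y - p))\<^sup>2))"
    using prox_regular_normal_ineq[OF C_closed C_ne C_pr xs] by blast
  obtain N0 where N0: "\<And>k. k \<ge> N0 \<Longrightarrow> norm (P k - xs) < R" using LIMSEQ_D[OF P_lim R] by auto
  have S'X: "(\<lambda>k. S' (x (nk k))) \<longlonglongrightarrow> S' xs" by (rule isCont_tendsto_compose[OF isCont_S' X])
  have a: "a \<longlonglongrightarrow> 0" and W': "W' \<longlonglongrightarrow> w" using A W unfolding a_def W'_def .
  have bound: "2 * R * (- (w \<bullet> S' xs (y - xs))) \<le> 2 * R * (Lg * norm (S' xs) / R * (norm (y - xs))\<^sup>2)"
    if y: "y \<in> C" for y
  proof (rule LIMSEQ_le)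
    have "(\<lambda>k. 2 * R * (a k \<bullet> (y - P k) - W' k \<bullet> S' (x (nk k)) (y - P k)))
        \<longlonglongrightarrow> 2 * R * (0 \<bullet> (y - xs) - w \<bullet> S' xs (y - xs))"
      by (intro tendsto_intros a W' P_lim S'X)
    then show "(\<lambda>k. 2 * R * (a k \<bullet> (y - P k) - W' k \<bullet> S' (x (nk k)) (y - P k)))
        \<longlonglongrightarrow> 2 * R * (- (w \<bullet> S' xs (y - xs)))" by simp
    have "(\<lambda>k. (norm (a k) + 2 * Lg * norm (S' (x (nk k)))) * (norm (y - P k))\<^sup>2)
        \<longlonglongrightarrow> (norm (0::'x) + 2 * Lg * norm (S' xs)) * (norm (y - xs))\<^sup>2"
      by (intro tendsto_intros a P_lim S'X)
    then show "(\<lambda>k. (norm (a k) + 2 * Lg * norm (S' (x (nk k)))) * (norm (y - P k))\<^sup>2)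
        \<longlonglongrightarrow> 2 * R * (Lg * norm (S' xs) / R * (norm (y - xs))\<^sup>2)" using R by (simp add: mult_ac)
    show "\<exists>N. \<forall>k\<ge>N. 2 * R * (a k \<bullet> (y - P k) - W' k \<bullet> S' (x (nk k)) (y - P k))
        \<le> (norm (a k) + 2 * Lg * norm (S' (x (nk k)))) * (norm (y - P k))\<^sup>2"
      unfolding a_def W'_def
      using proj_step_normal_ineq[OF nk P _ y] normal proj_in_set[OF P] N0 by blast
  qed
  have "- (w \<bullet> S' xs (y - xs)) \<le> Lg * norm (S' xs) / R * (norm (y - xs))\<^sup>2" if "y \<in> C" for y
    by (rule mult_left_le_imp_le[OF bound[OF that]]) (use R in simp)
  moreover have "0 \<le> Lg * norm (S' xs) / R" using Lg_nonneg R by simp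
  ultimately show ?thesis by blast
qed

lemma stationary_of_vanishing_residuals:
  assumes nk: "strict_mono nk" "\<And>k. nk k \<ge> 1" and X: "(\<lambda>k. x (nk k)) \<longlonglongrightarrow> xs" and xs: "xs \<in> C"
    and P: "\<And>k. P k \<in> proj C (x (nk k) - \<gamma> (nk k) *\<^sub>R grad (Fn (nk k)) (x (nk k)))"
    and A: "(\<lambda>k. (1 / \<gamma> (nk k)) *\<^sub>R (x (nk k) - P k)) \<longlonglongrightarrow> 0"
    and W: "(\<lambda>k. moreau_grad (\<mu> (nk k)) g (S (x (nk k)))) \<longlonglongrightarrow> w"
  shows "0 \<in> frechet_subdiff (\<lambda>y. if y \<in> C then ereal (g (S y)) else \<infinity>) xs"
proof -
  have "(\<lambda>k. \<mu> (nk k)) \<longlonglongrightarrow> 0" using LIMSEQ_subseq_LIMSEQ[OF mu_tendsto_0 nk(1)] by (simp add: o_def)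
  then have subgrad: "g (S xs) + w \<bullet> (u - S xs) - \<eta> * (norm (u - S xs))\<^sup>2 \<le> g u" for u
    using isCont_tendsto_compose[OF isCont_S X] W mu_pos[OF nk(2)] mu_le[OF nk(2)]
    by (intro moreau_grad_limit_subgradient[where z = "\<lambda>k. S (x (nk k))"])
  have w: "norm w \<le> 2 * Lg"
    using norm_moreau_grad_le[OF mu_pos[OF nk(2)] mu_le[OF nk(2)]]
    by (intro LIMSEQ_le_const2[OF tendsto_norm[OF W]]) blast
  have "P \<longlonglongrightarrow> xs" by (rule proj_points_tendsto[OF nk(2) X A])
  then obtain M where M: "0 \<le> M" and normal: "\<And>y. y \<in> C \<Longrightarrow> - (w \<bullet> S' xs (y - xs)) \<le> M * (norm (y - xs))\<^sup>2"
    using limiting_normal_ineq[OF nk(2) X xs P _ A W] by blast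
  show ?thesis by (rule stationary_of_subgradient_normal[OF xs subgrad w M normal])
qed

lemma exists_proj_point_below_stat_measure:
  assumes n: "n \<ge> 1" and t: "stat_measure (\<gamma> n) (Fn n) C (x n) < t"
  shows "\<exists>p. p \<in> proj C (x n - \<gamma> n *\<^sub>R grad (Fn n) (x n)) \<and> norm ((1 / \<gamma> n) *\<^sub>R (x n - p)) < t"
proof -
  define A where "A = {(1 / \<gamma> n) *\<^sub>R (x n - p) | p v. v \<in> frechet_subdiff (\<lambda>x. ereal (Fn n x)) (x n) \<and>
                                  p \<in> proj C (x n - \<gamma> n *\<^sub>R v)}"
  have A: "A = {(1 / \<gamma> n) *\<^sub>R (x n - p) | p. p \<in> proj C (x n - \<gamma> n *\<^sub>R grad (Fn n) (x n))}"
    unfolding A_def frechet_subdiff_Fn[OF n] by blast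
  have "x (Suc n) \<in> proj C (x n - \<gamma> n *\<^sub>R grad (Fn n) (x n))" using alg[OF n] by blast
  then have ne: "A \<noteq> {}" unfolding A by blast
  have "Inf ((\<lambda>a. dist 0 a) ` A) < t"
    using t unfolding stat_measure_def A_def[symmetric] infdist_notempty[OF ne] .
  then obtain a where "a \<in> A" "dist 0 a < t" using cInf_lessD[of "(\<lambda>a. dist 0 a) ` A" t] ne by blast
  then show ?thesis unfolding A by (auto simp: dist_norm)
qed

lemma exists_proj_points_tendsto_0:
  assumes nk: "\<And>k. nk k \<ge> 1"
    and lim: "(\<lambda>k. stat_measure (\<gamma> (nk k)) (Fn (nk k)) C (x (nk k))) \<longlonglongrightarrow> 0"
  shows "\<exists>P. (\<forall>k. P k \<in> proj C (x (nk k) - \<gamma> (nk k) *\<^sub>R grad (Fn (nk k)) (x (nk k))))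
           \<and> (\<lambda>k. (1 / \<gamma> (nk k)) *\<^sub>R (x (nk k) - P k)) \<longlonglongrightarrow> 0"
proof -
  define st where "st k = stat_measure (\<gamma> (nk k)) (Fn (nk k)) C (x (nk k))" for k
  have "\<forall>k. \<exists>p. p \<in> proj C (x (nk k) - \<gamma> (nk k) *\<^sub>R grad (Fn (nk k)) (x (nk k))) \<and>
      norm ((1 / \<gamma> (nk k)) *\<^sub>R (x (nk k) - p)) < st k + inverse (real (Suc k))"
    using exists_proj_point_below_stat_measure[OF nk] unfolding st_def by simp
  then obtain P where P: "\<And>k. P k \<in> proj C (x (nk k) - \<gamma> (nk k) *\<^sub>R grad (Fn (nk k)) (x (nk k)))"
      and P_near: "\<And>k. norm ((1 / \<gamma> (nk k)) *\<^sub>R (x (nk k) - P k)) < st k + inverse (real (Suc k))"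
    by metis
  have "(\<lambda>k. (1 / \<gamma> (nk k)) *\<^sub>R (x (nk k) - P k)) \<longlonglongrightarrow> 0"
  proof (rule Lim_null_comparison)
    show "\<forall>\<^sub>F k in sequentially. norm ((1 / \<gamma> (nk k)) *\<^sub>R (x (nk k) - P k)) \<le> st k + inverse (real (Suc k))"
      using P_near by (intro always_eventually allI less_imp_le)
    show "(\<lambda>k. st k + inverse (real (Suc k))) \<longlonglongrightarrow> 0"
      using tendsto_add[OF lim[folded st_def] LIMSEQ_inverse_real_of_nat] by simp
  qed
  with P show ?thesis by blast
qed

lemma stationary_cluster_point:
  assumes m: "strict_mono m" and lim: "(\<lambda>l. stat_measure (\<gamma> (m l)) (Fn (m l)) C (x (m l))) \<longlonglongrightarrow> 0"
    and xs: "xs \<in> C" and r: "strict_mono r" and cluster: "(x \<circ> m \<circ> r) \<longlonglongrightarrow> xs"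
  shows "0 \<in> frechet_subdiff (\<lambda>y. if y \<in> C then ereal (g (S y)) else \<infinity>) xs"
proof -
  define \<sigma> where "\<sigma> j = m (r (Suc j))" for j
  have \<sigma>: "strict_mono \<sigma>"
    unfolding strict_mono_def \<sigma>_def using strict_monoD[OF m] strict_monoD[OF r] by simp
  have \<sigma>1: "\<sigma> j \<ge> 1" for j
    using seq_suble[OF r, of "Suc j"] seq_suble[OF m, of "r (Suc j)"] unfolding \<sigma>_def by simp
  have X: "(\<lambda>j. x (\<sigma> j)) \<longlonglongrightarrow> xs"
    using LIMSEQ_Suc[OF cluster] unfolding \<sigma>_def by (simp add: o_def)
  have "(\<lambda>j. stat_measure (\<gamma> (\<sigma> j)) (Fn (\<sigma> j)) C (x (\<sigma> j))) \<longlonglongrightarrow> 0"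
    using LIMSEQ_Suc[OF LIMSEQ_subseq_LIMSEQ[OF lim r]] unfolding \<sigma>_def by (simp add: o_def)
  then obtain p where p: "\<And>j. p j \<in> proj C (x (\<sigma> j) - \<gamma> (\<sigma> j) *\<^sub>R grad (Fn (\<sigma> j)) (x (\<sigma> j)))"
      and A: "(\<lambda>j. (1 / \<gamma> (\<sigma> j)) *\<^sub>R (x (\<sigma> j) - p j)) \<longlonglongrightarrow> 0"
    using exists_proj_points_tendsto_0[of \<sigma>, OF \<sigma>1] by blast
  have "bounded (range (\<lambda>j. moreau_grad (\<mu> (\<sigma> j)) g (S (x (\<sigma> j)))))"
    unfolding bounded_iff using norm_moreau_grad_le[OF mu_pos[OF \<sigma>1] mu_le[OF \<sigma>1]] by blast
  then obtain w \<psi> where \<psi>: "strict_mono \<psi>"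
    and W: "((\<lambda>j. moreau_grad (\<mu> (\<sigma> j)) g (S (x (\<sigma> j)))) \<circ> \<psi>) \<longlonglongrightarrow> w"
    using bounded_imp_convergent_subsequence by blast
  show ?thesis
  proof (rule stationary_of_vanishing_residuals[of "\<sigma> \<circ> \<psi>" xs "p \<circ> \<psi>" w])
    show "strict_mono (\<sigma> \<circ> \<psi>)" by (rule strict_mono_o[OF \<sigma> \<psi>])
    show "(\<lambda>k. x ((\<sigma> \<circ> \<psi>) k)) \<longlonglongrightarrow> xs"
      using LIMSEQ_subseq_LIMSEQ[OF X \<psi>] by (simp add: o_def)
    show "(\<lambda>k. (1 / \<gamma> ((\<sigma> \<circ> \<psi>) k)) *\<^sub>R (x ((\<sigma> \<circ> \<psi>) k) - (p \<circ> \<psi>) k)) \<longlonglongrightarrow> 0"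
      using LIMSEQ_subseq_LIMSEQ[OF A \<psi>] by (simp add: o_def)
    show "(\<lambda>k. moreau_grad (\<mu> ((\<sigma> \<circ> \<psi>) k)) g (S (x ((\<sigma> \<circ> \<psi>) k)))) \<longlonglongrightarrow> w"
      using W by (simp add: o_def)
  qed (use \<sigma>1 xs p in auto)
qed

end

theorem theorem2:
  fixes S :: "'x::euclidean_space \<Rightarrow> 'z::euclidean_space"
    and S' :: "'x \<Rightarrow> 'x \<Rightarrow>\<^sub>L 'z"
    and g :: "'z \<Rightarrow> real"
    and C :: "'x set"
    and \<eta> c \<rho> \<gamma>t \<alpha> :: real
    and x :: "nat \<Rightarrow> 'x"
    and \<gamma> :: "nat \<Rightarrow> real"
    and \<mu> :: "nat \<Rightarrow> real"
    and Fn :: "nat \<Rightarrow> 'x \<Rightarrow> real"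
  assumes S_deriv: "\<And>y. (S has_derivative blinfun_apply (S' y)) (at y)"
    and S_lip: "\<exists>L. L-lipschitz_on UNIV S"
    and DS_lip: "\<exists>L. L-lipschitz_on UNIV S'"
    and g_lip: "\<exists>L. L-lipschitz_on UNIV g"
    and eta_pos: "\<eta> > 0"
    and g_wc: "weakly_convex \<eta> g"
    and C_ne: "C \<noteq> {}" and C_closed: "closed C" and C_pr: "prox_regular C"
    and argmin_ne: "\<exists>y\<in>C. \<forall>w\<in>C. g (S y) \<le> g (S w)"
    and x1: "x 1 \<in> C"
    and c: "0 < c" "c < 1 / 2"
    and rho: "0 < \<rho>" "\<rho> < 1"
    and gt: "\<gamma>t > 0"
    and alpha: "\<alpha> \<ge> 1"
    and mu_def: "\<And>n. \<mu> n = 1 / (2 * \<eta>) * real n powr (- 1 / \<alpha>)"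
    and Fn_def: "\<And>n. Fn n = (\<lambda>y. moreau_env (\<mu> n) g (S y))"
    and alg: "\<And>n. n \<ge> 1 \<Longrightarrow> \<exists>m::nat.
        \<gamma> n = \<rho> ^ m * \<gamma>t
      \<and> x (Suc n) \<in> proj C (x n - \<gamma> n *\<^sub>R grad (Fn n) (x n))
      \<and> Fn n (x (Suc n)) \<le> Fn n (x n)
            - c * \<gamma> n * (norm ((1 / \<gamma> n) *\<^sub>R (x n - x (Suc n))))\<^sup>2
      \<and> (\<forall>k<m. \<exists>y \<in> proj C (x n - (\<rho> ^ k * \<gamma>t) *\<^sub>R grad (Fn n) (x n)).
            \<not> (Fn n y \<le> Fn n (x n)
                 - c * (\<rho> ^ k * \<gamma>t) * (norm ((1 / (\<rho> ^ k * \<gamma>t)) *\<^sub>R (x n - y)))\<^sup>2))"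
  shows "liminf (\<lambda>n. ereal (stat_measure (\<gamma> n) (Fn n) C (x n))) = 0
         \<and> (\<forall>m xs. strict_mono m \<longrightarrow>
           (\<lambda>l. stat_measure (\<gamma> (m l)) (Fn (m l)) C (x (m l))) \<longlonglongrightarrow> 0 \<longrightarrow>
           xs \<in> C \<longrightarrow> (\<exists>r. strict_mono r \<and> (x \<circ> m \<circ> r) \<longlonglongrightarrow> xs) \<longrightarrow>
           0 \<in> frechet_subdiff (\<lambda>y. if y \<in> C then ereal (g (S y)) else \<infinity>) xs)"
proof -
  obtain LS LD Lg where "LS-lipschitz_on UNIV S" "LD-lipschitz_on UNIV S'" "Lg-lipschitz_on UNIV g"
    using S_lip DS_lip g_lip by blast
  then interpret projected_variable_smoothing g \<eta> Lg S S' LS LD C c \<rho> \<gamma>t \<alpha> x \<gamma> \<mu> Fn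
    using S_deriv eta_pos g_wc C_ne C_closed C_pr argmin_ne x1 c rho gt alpha mu_def Fn_def alg
    by unfold_locales blast+
  show ?thesis using liminf_stat_measure_eq_0 stationary_cluster_point by blast
qed

end
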